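(* Let $\beta,\delta\in(0,1)$, $K>0$, $T>0$, and consider the controlled system $$f'=\tfrac12 fm\beta L-\delta f-\eta_1(t)f,\qquad m'=\tfrac12 fm\beta L-\delta m+\eta_2(t)m,\qquad L=1-\frac{f+m}{K},$$ with given initial conditions. The admissible set is $U_1=\{(\eta_1,\eta_2)$ measurable, $0\le\eta_1\le1$, $0\le\eta_2<\delta\}$ and the objective is $J_1=\int_0^T\big(-(f+m)-\tfrac12(\eta_1^2+\eta_2^2)\big)dt$. An optimal control $(\eta_1^*,\eta_2^* )\in U_1$ maximizing $J_1$ is characterized by $$\eta_1^*(t)=\min(1,\max(0,-f\lambda_1)),\qquad \eta_2^*(t)=\min(1,\max(0,m\lambda_2)).$$ Here $(f,m)$ is the corresponding state and $(\lambda_1,\lambda_2)$ solves $$\lambda_1'=1-\lambda_1\Big[\tfrac{m\beta}{2}L-\tfrac{fm\beta}{2K}-\delta-\eta_1\Big]-\lambda_2\Big[\tfrac{m\beta}{2}L-\tfrac{fm\beta}{2K}\Big],$$ $$\lambda_2'=1-\lambda_1\Big[\tfrac{f\beta}{2}L-\tfrac{fm\beta}{2K}\Big]-\lambda_2\Big[\tfrac{f\beta}{2}L-\tfrac{fm\beta}{2K}-\delta+\eta_2\Big],$$ with $\lambda_1(T)=\lambda_2(T)=0$.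
   Context: $f,m$ are female and male densities, $\eta_1$ is the female harvesting rate and $\eta_2$ the male stocking rate. The characterization is the necessary condition from Pontryagin's maximum principle with Hamiltonian $H_1=-(f+m)-\tfrac12(\eta_1^2+\eta_2^2)+\lambda_1f'+\lambda_2m'$. *)

theory Defs
  imports "HOL-Analysis.Analysis"
begin

definition Lfac :: "real \<Rightarrow> real \<Rightarrow> real \<Rightarrow> real" where
  "Lfac K x y = 1 - (x + y) / K"

definition admissible1 :: "real \<Rightarrow> real \<Rightarrow> (real \<Rightarrow> real) \<Rightarrow> (real \<Rightarrow> real) \<Rightarrow> bool" where
  "admissible1 \<delta> T \<eta>1 \<eta>2 \<longleftrightarrow>
     \<eta>1 \<in> borel_measurable (lebesgue_on {0..T}) \<and>
     \<eta>2 \<in> borel_measurable (lebesgue_on {0..T}) \<and>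
     (\<forall>t\<in>{0..T}. 0 \<le> \<eta>1 t \<and> \<eta>1 t \<le> 1 \<and> 0 \<le> \<eta>2 t \<and> \<eta>2 t < \<delta>)"

text \<open>(f,m) is the state corresponding to the controls (eta1,eta2) with initial
  data (f0,m0): a (Caratheodory) solution of the state system on [0,T],
  written in integral form.\<close>
definition is_state1 ::
  "real \<Rightarrow> real \<Rightarrow> real \<Rightarrow> real \<Rightarrow> real \<Rightarrow> real \<Rightarrow> (real \<Rightarrow> real) \<Rightarrow> (real \<Rightarrow> real)
   \<Rightarrow> (real \<Rightarrow> real) \<Rightarrow> (real \<Rightarrow> real) \<Rightarrow> bool" where
  "is_state1 \<beta> \<delta> K T f0 m0 \<eta>1 \<eta>2 f m \<longleftrightarrow>
     f 0 = f0 \<and> m 0 = m0 \<and>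
     (\<forall>t\<in>{0..T}.
        ((\<lambda>s. 1/2 * f s * m s * \<beta> * Lfac K (f s) (m s) - \<delta> * f s - \<eta>1 s * f s)
            has_integral (f t - f0)) {0..t} \<and>
        ((\<lambda>s. 1/2 * f s * m s * \<beta> * Lfac K (f s) (m s) - \<delta> * m s + \<eta>2 s * m s)
            has_integral (m t - m0)) {0..t})"

definition J1 :: "real \<Rightarrow> (real \<Rightarrow> real) \<Rightarrow> (real \<Rightarrow> real) \<Rightarrow> (real \<Rightarrow> real) \<Rightarrow> (real \<Rightarrow> real) \<Rightarrow> real" where
  "J1 T \<eta>1 \<eta>2 f m = integral {0..T} (\<lambda>t. - (f t + m t) - 1/2 * ((\<eta>1 t)\<^sup>2 + (\<eta>2 t)\<^sup>2))"

definition is_adjoint1 ::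
  "real \<Rightarrow> real \<Rightarrow> real \<Rightarrow> real \<Rightarrow> (real \<Rightarrow> real) \<Rightarrow> (real \<Rightarrow> real)
   \<Rightarrow> (real \<Rightarrow> real) \<Rightarrow> (real \<Rightarrow> real) \<Rightarrow> (real \<Rightarrow> real) \<Rightarrow> (real \<Rightarrow> real) \<Rightarrow> bool" where
  "is_adjoint1 \<beta> \<delta> K T \<eta>1 \<eta>2 f m p1 p2 \<longleftrightarrow>
     p1 T = 0 \<and> p2 T = 0 \<and>
     (\<forall>t\<in>{0..T}.
        ((\<lambda>s. 1 - p1 s * (m s * \<beta> / 2 * Lfac K (f s) (m s) - f s * m s * \<beta> / (2 * K) - \<delta> - \<eta>1 s)
                 - p2 s * (m s * \<beta> / 2 * Lfac K (f s) (m s) - f s * m s * \<beta> / (2 * K)))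
            has_integral (p1 T - p1 t)) {t..T} \<and>
        ((\<lambda>s. 1 - p1 s * (f s * \<beta> / 2 * Lfac K (f s) (m s) - f s * m s * \<beta> / (2 * K))
                 - p2 s * (f s * \<beta> / 2 * Lfac K (f s) (m s) - f s * m s * \<beta> / (2 * K) - \<delta> + \<eta>2 s))
            has_integral (p2 T - p2 t)) {t..T})"

end

(*
  The argument is a first-order perturbation argument that needs no differentiability of the
  control-to-state map. Fix a control v strictly inside the box [0,1] x [0,delta] and let
  (phi, psi) solve the state equations linearised along the optimal pair (f, m), forced by
  the variation v - eta. Since the growth term is a polynomial in the state, one can write down
  controls u_e = eta + e (v - eta) + O(e^2) whose state is exactly (f + e phi, m + e psi); they
  are admissible for small e > 0 and J1(u_e) = J1(eta) + e I - O(e^2), so optimality gives I <= 0.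
  An adjoint solution (lambda1, lambda2), obtained together with (phi, psi) by Picard iteration,
  turns I via Fubini into the integral of
    (- f lambda1 - eta1) (v1 - eta1) + (m lambda2 - eta2) (v2 - eta2).
  Testing this variational inequality with v close to the pointwise projection of
  (- f lambda1, m lambda2) onto the box shows that eta equals this projection almost everywhere;
  as eta2 < delta < 1, the projection onto [0, delta] is also min 1 (max 0 (m lambda2)).
*)

theory Submission
  imports Defs
begin

section \<open>Volterra integral equations\<close>

lemma has_integral_power_from:
  fixes a b :: real
  assumes "a \<le> b"
  shows "((\<lambda>u. (u - a) ^ n) has_integral (b - a) ^ Suc n / Suc n) {a..b}"
proof -
  have "((\<lambda>u. (u - a) ^ n) has_integral (b - a) ^ Suc n / Suc n - (a - a) ^ Suc n / Suc n) {a..b}"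
  proof (rule fundamental_theorem_of_calculus[OF assms])
    fix u assume "u \<in> {a..b}"
    show "((\<lambda>u. (u - a) ^ Suc n / Suc n) has_vector_derivative (u - a) ^ n) (at u within {a..b})"
      unfolding has_real_derivative_iff_has_vector_derivative[symmetric]
      by (rule derivative_eq_intros refl | simp)+
  qed
  then show ?thesis by simp
qed

lemma has_integral_power_to:
  fixes a b :: real
  assumes "a \<le> b"
  shows "((\<lambda>u. (b - u) ^ n) has_integral (b - a) ^ Suc n / Suc n) {a..b}"
proof -
  have "((\<lambda>u. (b - u) ^ n) has_integral ((- ((b - b) ^ Suc n / Suc n)) - (- ((b - a) ^ Suc n / Suc n)))) {a..b}"
  proof (rule fundamental_theorem_of_calculus[OF assms])
    fix u assume "u \<in> {a..b}"
    show "((\<lambda>u. - ((b - u) ^ Suc n / Suc n)) has_vector_derivative (b - u) ^ n) (at u within {a..b})"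
      unfolding has_real_derivative_iff_has_vector_derivative[symmetric]
      by (rule derivative_eq_intros refl | simp)+
  qed
  then show ?thesis by simp
qed

lemma tendsto_integral_uniform_limit:
  fixes f :: "nat \<Rightarrow> real \<Rightarrow> 'a::banach"
  assumes lim: "uniform_limit {a..b} f g sequentially"
    and f: "\<And>n. f n integrable_on {a..b}" and g: "g integrable_on {a..b}"
  shows "(\<lambda>n. integral {a..b} (f n)) \<longlonglongrightarrow> integral {a..b} g"
proof (rule tendstoI)
  fix e :: real assume "0 < e"
  define e' where "e' = e / (2 * (\<bar>b - a\<bar> + 1))"
  have "0 < e'" using \<open>0 < e\<close> by (simp add: e'_def add_nonneg_pos)
  then have "\<forall>\<^sub>F n in sequentially. \<forall>s\<in>{a..b}. dist (f n s) (g s) < e'"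
    using lim by (simp add: uniform_limit_iff)
  then show "\<forall>\<^sub>F n in sequentially. dist (integral {a..b} (f n)) (integral {a..b} g) < e"
  proof eventually_elim
    case (elim n)
    have "dist (integral {a..b} (f n)) (integral {a..b} g) = norm (integral {a..b} (\<lambda>s. f n s - g s))"
      by (simp add: integral_diff[OF f g] dist_norm)
    also have "\<dots> \<le> integral {a..b} (\<lambda>_. e')"
      using elim by (intro integral_norm_bound_integral integrable_diff f g)
        (auto simp: dist_norm less_imp_le)
    also have "\<dots> \<le> e' * \<bar>b - a\<bar>"
      using \<open>0 < e'\<close> by (simp add: content_real_if)
    also have "\<dots> < e"
    proof -
      have "0 < \<bar>b - a\<bar> + 1" by simp
      then show ?thesis using \<open>0 < e\<close> by (simp add: e'_def field_simps add_pos_nonneg)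
    qed
    finally show ?case .
  qed
qed

definition picard_iterate :: "((real \<Rightarrow> 'a) \<Rightarrow> real \<Rightarrow> 'a::real_normed_vector) \<Rightarrow> nat \<Rightarrow> real \<Rightarrow> 'a" where
  "picard_iterate G n = ((\<lambda>x t. integral {0..t} (G x)) ^^ n) (\<lambda>_. 0)"

lemma picard_iterate_0 [simp]: "picard_iterate G 0 = (\<lambda>_. 0)"
  and picard_iterate_Suc: "picard_iterate G (Suc n) = (\<lambda>t. integral {0..t} (G (picard_iterate G n)))"
  by (simp_all add: picard_iterate_def)

context
  fixes G :: "(real \<Rightarrow> 'a::banach) \<Rightarrow> real \<Rightarrow> 'a" and T L :: real
  assumes T: "0 \<le> T" and L: "0 \<le> L"
    and integrable: "\<And>x. continuous_on {0..T} x \<Longrightarrow> G x integrable_on {0..T}"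
    and lipschitz: "\<And>x y s. continuous_on {0..T} x \<Longrightarrow> continuous_on {0..T} y \<Longrightarrow> s \<in> {0..T}
      \<Longrightarrow> norm (G x s - G y s) \<le> L * norm (x s - y s)"
begin

lemma integrable_on_initial_segment:
  "continuous_on {0..T} x \<Longrightarrow> t \<in> {0..T} \<Longrightarrow> G x integrable_on {0..t}"
  using integrable_on_subinterval[OF integrable] by auto

lemma continuous_picard_iterate: "continuous_on {0..T} (picard_iterate G n)"
  by (induction n) (auto simp: picard_iterate_Suc intro!: indefinite_integral_continuous_1 integrable)

lemma picard_iterate_diff_bound:
  assumes B: "\<forall>t\<in>{0..T}. norm (picard_iterate G 1 t) \<le> B"
  shows "t \<in> {0..T} \<Longrightarrow> norm (picard_iterate G (Suc n) t - picard_iterate G n t) \<le> B * (L * t) ^ n / fact n"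
proof (induction n arbitrary: t)
  case 0
  then show ?case using B by (simp add: picard_iterate_Suc)
next
  case (Suc n)
  let ?X = "picard_iterate G"
  define c where "c = L * B * L ^ n / fact n"
  have "?X (Suc (Suc n)) t - ?X (Suc n) t = integral {0..t} (G (?X (Suc n))) - integral {0..t} (G (?X n))"
    by (simp only: picard_iterate_Suc)
  also have "\<dots> = integral {0..t} (\<lambda>s. G (?X (Suc n)) s - G (?X n) s)"
    using Suc.prems by (intro integral_diff[symmetric] integrable_on_initial_segment continuous_picard_iterate)
  finally have "norm (?X (Suc (Suc n)) t - ?X (Suc n) t) = norm (integral {0..t} (\<lambda>s. G (?X (Suc n)) s - G (?X n) s))"
    by simp
  also have "\<dots> \<le> integral {0..t} (\<lambda>s. c * (s - 0) ^ n)"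
  proof (rule integral_norm_bound_integral)
    show "(\<lambda>s. G (?X (Suc n)) s - G (?X n) s) integrable_on {0..t}"
      using Suc.prems by (intro integrable_diff integrable_on_initial_segment continuous_picard_iterate)
    show "(\<lambda>s. c * (s - 0) ^ n) integrable_on {0..t}"
      by (intro integrable_on_mult_right has_integral_integrable[OF has_integral_power_from])
        (use Suc.prems in auto)
  next
    fix s assume "s \<in> {0..t}"
    then have "s \<in> {0..T}" using Suc.prems by auto
    then have "norm (G (?X (Suc n)) s - G (?X n) s) \<le> L * (B * (L * s) ^ n / fact n)"
      using lipschitz[OF continuous_picard_iterate continuous_picard_iterate] Suc.IH L
      by (meson mult_left_mono order_trans)
    then show "norm (G (?X (Suc n)) s - G (?X n) s) \<le> c * (s - 0) ^ n"
      by (simp add: c_def power_mult_distrib)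
  qed
  also have "\<dots> = c * (t ^ Suc n / Suc n)"
    using has_integral_power_from[of 0 t n] Suc.prems by (simp add: integral_unique)
  also have "\<dots> = B * (L * t) ^ Suc n / fact (Suc n)"
    by (simp add: c_def power_mult_distrib field_simps del: of_nat_Suc)
  finally show ?case .
qed

lemma picard_iterate_converges:
  obtains x where "uniform_limit {0..T} (picard_iterate G) x sequentially"
proof -
  let ?X = "picard_iterate G"
  obtain B where B: "\<forall>t\<in>{0..T}. norm (?X 1 t) \<le> B"
    using compact_imp_bounded[OF compact_continuous_image[OF continuous_picard_iterate[of 1]]]
    by (auto simp: bounded_iff)
  then have "0 \<le> B" using T by (auto intro: order_trans[OF norm_ge_zero])
  note bound = picard_iterate_diff_bound[OF B]
  have "summable (\<lambda>n. B * (L * T) ^ n / fact n)"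
    using summable_mult[OF summable_exp[of "L * T"], of B] by (simp add: field_simps)
  then have "uniform_limit {0..T} (\<lambda>n t. \<Sum>i<n. ?X (Suc i) t - ?X i t) (\<lambda>t. \<Sum>i. ?X (Suc i) t - ?X i t) sequentially"
  proof (rule Weierstrass_m_test[rotated])
    fix n t assume t: "t \<in> {0..T}"
    have "(L * t) ^ n \<le> (L * T) ^ n"
      using t L by (intro power_mono mult_left_mono) auto
    then have "B * (L * t) ^ n / fact n \<le> B * (L * T) ^ n / fact n"
      using \<open>0 \<le> B\<close> by (intro divide_right_mono mult_left_mono) auto
    then show "norm (?X (Suc n) t - ?X n t) \<le> B * (L * T) ^ n / fact n"
      using bound[OF t] by (rule order_trans[rotated])
  qed
  moreover have "(\<lambda>t. \<Sum>i<n. ?X (Suc i) t - ?X i t) = ?X n" for n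
    by (rule ext, subst sum_lessThan_telescope) simp
  ultimately show thesis using that by auto
qed

lemma volterra_integral_equation_solvable:
  "\<exists>x. continuous_on {0..T} x \<and> (\<forall>t\<in>{0..T}. (G x has_integral x t) {0..t})"
proof -
  let ?X = "picard_iterate G"
  obtain x where lim: "uniform_limit {0..T} ?X x sequentially"
    using picard_iterate_converges by blast
  have cont_x: "continuous_on {0..T} x"
    by (rule uniform_limit_theorem[OF _ lim]) (auto intro: always_eventually continuous_picard_iterate)
  have lim_G: "uniform_limit {0..T} (\<lambda>n. G (?X n)) (G x) sequentially"
  proof (rule uniform_limitI)
    fix e :: real assume "0 < e"
    then have "\<forall>\<^sub>F n in sequentially. \<forall>s\<in>{0..T}. dist (?X n s) (x s) < e / (L + 1)"
      using lim L by (simp add: uniform_limit_iff)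
    then show "\<forall>\<^sub>F n in sequentially. \<forall>s\<in>{0..T}. dist (G (?X n) s) (G x s) < e"
    proof (elim eventually_mono, intro ballI)
      fix n s assume close: "\<forall>s\<in>{0..T}. dist (?X n s) (x s) < e / (L + 1)" and s: "s \<in> {0..T}"
      have "dist (G (?X n) s) (G x s) \<le> L * dist (?X n s) (x s)"
        using lipschitz[OF continuous_picard_iterate cont_x s] by (simp add: dist_norm)
      also have "\<dots> \<le> L * (e / (L + 1))"
        using close s L by (intro mult_left_mono) (auto simp: less_imp_le)
      also have "\<dots> < e"
        using \<open>0 < e\<close> L by (simp add: field_simps)
      finally show "dist (G (?X n) s) (G x s) < e" .
    qed
  qed
  have "(G x has_integral x t) {0..t}" if t: "t \<in> {0..T}" for t
  proof -
    have "(\<lambda>n. ?X (Suc n) t) \<longlonglongrightarrow> integral {0..t} (G x)"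
      unfolding picard_iterate_Suc
      by (rule tendsto_integral_uniform_limit[OF uniform_limit_on_subset[OF lim_G]])
        (use t in \<open>auto intro: integrable_on_initial_segment continuous_picard_iterate cont_x\<close>)
    moreover have "(\<lambda>n. ?X (Suc n) t) \<longlonglongrightarrow> x t"
      using LIMSEQ_Suc[OF tendsto_uniform_limitI[OF lim t]] .
    ultimately have "integral {0..t} (G x) = x t"
      by (rule LIMSEQ_unique)
    then show ?thesis
      using integrable_on_initial_segment[OF cont_x t] by (metis has_integral_integral)
  qed
  with cont_x show ?thesis by blast
qed

end

lemma has_integral_reflect_interval:
  fixes h :: "real \<Rightarrow> 'a::banach"
  assumes "(h has_integral I) {a..b}"
  shows "((\<lambda>s. h (c - s)) has_integral I) {c - b..c - a}"
proof -
  have "((\<lambda>s. h (- s)) has_integral I) (cbox (- b) (- a))"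
    using assms by (simp add: cbox_interval)
  from has_integral_affinity'[OF this, of 1 "- c"] show ?thesis
    by (simp add: cbox_interval algebra_simps)
qed

lemma volterra_integral_equation_solvable_backward:
  fixes G :: "(real \<Rightarrow> 'a::banach) \<Rightarrow> real \<Rightarrow> 'a" and T L :: real
  assumes "0 \<le> T" "0 \<le> L"
    and integrable: "\<And>x. continuous_on {0..T} x \<Longrightarrow> G x integrable_on {0..T}"
    and lipschitz: "\<And>x y s. continuous_on {0..T} x \<Longrightarrow> continuous_on {0..T} y \<Longrightarrow> s \<in> {0..T}
      \<Longrightarrow> norm (G x s - G y s) \<le> L * norm (x s - y s)"
  shows "\<exists>x. continuous_on {0..T} x \<and> (\<forall>t\<in>{0..T}. (G x has_integral x t) {t..T})"
proof -
  define reverse :: "(real \<Rightarrow> 'a) \<Rightarrow> real \<Rightarrow> 'a" where "reverse x s = x (T - s)" for x s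
  have cont_reverse: "continuous_on {0..T} (reverse x)" if "continuous_on {0..T} x" for x
    unfolding reverse_def by (rule continuous_on_compose2[OF that]) (auto intro!: continuous_intros)
  have "\<exists>y. continuous_on {0..T} y \<and> (\<forall>t\<in>{0..T}. (reverse (G (reverse y)) has_integral y t) {0..t})"
  proof (rule volterra_integral_equation_solvable[OF assms(1,2)])
    fix x :: "real \<Rightarrow> 'a" assume "continuous_on {0..T} x"
    then have "(reverse (G (reverse x)) has_integral integral {0..T} (G (reverse x))) {0..T}"
      unfolding reverse_def[of "G (reverse x)"]
      using has_integral_reflect_interval[OF integrable_integral[OF integrable[OF cont_reverse]], where c=T]
      by simp
    then show "reverse (G (reverse x)) integrable_on {0..T}" by blast
  next
    fix x y :: "real \<Rightarrow> 'a" and s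
    assume "continuous_on {0..T} x" "continuous_on {0..T} y" "s \<in> {0..T}"
    then show "norm (reverse (G (reverse x)) s - reverse (G (reverse y)) s) \<le> L * norm (x s - y s)"
      using lipschitz[OF cont_reverse cont_reverse, of x y "T - s"] by (simp add: reverse_def)
  qed
  then obtain y where y: "continuous_on {0..T} y" "\<And>t. t \<in> {0..T} \<Longrightarrow> (reverse (G (reverse y)) has_integral y t) {0..t}"
    by blast
  have "(G (reverse y) has_integral reverse y t) {t..T}" if "t \<in> {0..T}" for t
    using has_integral_reflect_interval[OF y(2)[of "T - t"], of T] that by (simp add: reverse_def)
  with cont_reverse[OF y(1)] show ?thesis by blast
qed

section \<open>Linear systems with bounded measurable coefficients\<close>

lemma has_integral_Pair_iff:
  fixes f :: "real \<Rightarrow> 'a::real_normed_vector" and g :: "real \<Rightarrow> 'b::real_normed_vector"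
  shows "((\<lambda>s. (f s, g s)) has_integral (a, b)) S \<longleftrightarrow> (f has_integral a) S \<and> (g has_integral b) S"
proof
  assume "((\<lambda>s. (f s, g s)) has_integral (a, b)) S"
  from has_integral_linear[OF this bounded_linear_fst] has_integral_linear[OF this bounded_linear_snd]
  show "(f has_integral a) S \<and> (g has_integral b) S" by (simp add: o_def)
next
  assume "(f has_integral a) S \<and> (g has_integral b) S"
  then have "((\<lambda>s. (f s, 0) + (0, g s)) has_integral (a, 0) + (0, b)) S"
    using has_integral_linear[of f a S "\<lambda>v. (v, 0)"] has_integral_linear[of g b S "\<lambda>v. (0, v)"]
      bounded_linear_Pair[OF bounded_linear_ident bounded_linear_zero]
      bounded_linear_Pair[OF bounded_linear_zero bounded_linear_ident]
    by (intro has_integral_add) (auto simp: o_def)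
  then show "((\<lambda>s. (f s, g s)) has_integral (a, b)) S" by simp
qed

definition bounded_measurable_on :: "real set \<Rightarrow> (real \<Rightarrow> real) \<Rightarrow> bool" where
  "bounded_measurable_on S f \<longleftrightarrow> f \<in> borel_measurable (lebesgue_on S) \<and> (\<exists>B. \<forall>s\<in>S. \<bar>f s\<bar> \<le> B)"

lemma bounded_measurable_onI:
  "f \<in> borel_measurable (lebesgue_on S) \<Longrightarrow> (\<And>s. s \<in> S \<Longrightarrow> \<bar>f s\<bar> \<le> B) \<Longrightarrow> bounded_measurable_on S f"
  unfolding bounded_measurable_on_def by blast

lemma bounded_measurable_on_measurable:
  "bounded_measurable_on S f \<Longrightarrow> f \<in> borel_measurable (lebesgue_on S)"
  unfolding bounded_measurable_on_def by blast

lemma bounded_measurable_onE: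
  assumes "bounded_measurable_on S f"
  obtains B where "0 \<le> B" "\<And>s. s \<in> S \<Longrightarrow> \<bar>f s\<bar> \<le> B"
proof -
  obtain B where "\<And>s. s \<in> S \<Longrightarrow> \<bar>f s\<bar> \<le> B"
    using assms unfolding bounded_measurable_on_def by blast
  then show ?thesis
    by (intro that[of "\<bar>B\<bar>"]) (auto intro: order_trans[OF _ abs_ge_self])
qed

lemma bounded_measurable_on_const: "bounded_measurable_on S (\<lambda>_. c)"
  by (rule bounded_measurable_onI[of _ _ "\<bar>c\<bar>"]) auto

lemma bounded_measurable_on_continuous:
  assumes "continuous_on {a..b} f"
  shows "bounded_measurable_on {a..b} f"
proof -
  obtain B where "\<forall>s\<in>{a..b}. norm (f s) \<le> B"
    using compact_imp_bounded[OF compact_continuous_image[OF assms]] by (auto simp: bounded_iff)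
  then show ?thesis
    using continuous_imp_measurable_on_sets_lebesgue[OF assms] by (intro bounded_measurable_onI) auto
qed

lemma bounded_measurable_on_add:
  assumes f: "bounded_measurable_on S f" and g: "bounded_measurable_on S g"
  shows "bounded_measurable_on S (\<lambda>s. f s + g s)"
proof -
  obtain B where B: "\<And>s. s \<in> S \<Longrightarrow> \<bar>f s\<bar> \<le> B"
    using bounded_measurable_onE[OF f] by blast
  obtain C where C: "\<And>s. s \<in> S \<Longrightarrow> \<bar>g s\<bar> \<le> C"
    using bounded_measurable_onE[OF g] by blast
  have "\<bar>f s + g s\<bar> \<le> B + C" if "s \<in> S" for s
    using abs_triangle_ineq[of "f s" "g s"] B[OF that] C[OF that] by linarith
  then show ?thesis
    using bounded_measurable_on_measurable[OF f] bounded_measurable_on_measurable[OF g]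
    by (intro bounded_measurable_onI borel_measurable_add)
qed

lemma bounded_measurable_on_uminus:
  assumes f: "bounded_measurable_on S f"
  shows "bounded_measurable_on S (\<lambda>s. - f s)"
proof -
  obtain B where "\<And>s. s \<in> S \<Longrightarrow> \<bar>f s\<bar> \<le> B"
    using bounded_measurable_onE[OF f] by blast
  then show ?thesis
    using bounded_measurable_on_measurable[OF f]
    by (intro bounded_measurable_onI[of _ _ B] borel_measurable_uminus) auto
qed

lemma bounded_measurable_on_diff:
  "bounded_measurable_on S f \<Longrightarrow> bounded_measurable_on S g \<Longrightarrow> bounded_measurable_on S (\<lambda>s. f s - g s)"
  using bounded_measurable_on_add[of S f "\<lambda>s. - g s"] bounded_measurable_on_uminus[of S g] by simp

lemma bounded_measurable_on_mult:
  assumes f: "bounded_measurable_on S f" and g: "bounded_measurable_on S g"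
  shows "bounded_measurable_on S (\<lambda>s. f s * g s)"
proof -
  obtain B where "0 \<le> B" "\<And>s. s \<in> S \<Longrightarrow> \<bar>f s\<bar> \<le> B"
    using bounded_measurable_onE[OF f] by blast
  moreover obtain C where "\<And>s. s \<in> S \<Longrightarrow> \<bar>g s\<bar> \<le> C"
    using bounded_measurable_onE[OF g] by blast
  ultimately have "\<bar>f s * g s\<bar> \<le> B * C" if "s \<in> S" for s
    unfolding abs_mult using that by (intro mult_mono) auto
  then show ?thesis
    using bounded_measurable_on_measurable[OF f] bounded_measurable_on_measurable[OF g]
    by (intro bounded_measurable_onI[of _ _ "B * C"] borel_measurable_times)
qed

lemmas bounded_measurable_on_intros =
  bounded_measurable_on_const bounded_measurable_on_add
  bounded_measurable_on_uminus bounded_measurable_on_diff bounded_measurable_on_mult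

lemma bounded_measurable_on_integrable:
  assumes "bounded_measurable_on {a..b} f"
  shows "f integrable_on {a..b}"
proof -
  obtain B where "\<And>s. s \<in> {a..b} \<Longrightarrow> \<bar>f s\<bar> \<le> B"
    using bounded_measurable_onE[OF assms] by blast
  then show ?thesis
    using bounded_measurable_on_measurable[OF assms]
      measurable_bounded_by_integrable_imp_integrable_real[of f "{a..b}" "\<lambda>_. B"]
      integrable_const_ivl[of B a b] by simp
qed

definition linear_field ::
  "(real \<Rightarrow> real) \<Rightarrow> (real \<Rightarrow> real) \<Rightarrow> (real \<Rightarrow> real) \<Rightarrow> (real \<Rightarrow> real) \<Rightarrow> (real \<Rightarrow> real)
   \<Rightarrow> (real \<Rightarrow> real) \<Rightarrow> (real \<Rightarrow> real \<times> real) \<Rightarrow> real \<Rightarrow> real \<times> real" where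
  "linear_field a11 a12 a21 a22 b1 b2 z s =
     (a11 s * fst (z s) + a12 s * snd (z s) + b1 s, a21 s * fst (z s) + a22 s * snd (z s) + b2 s)"

lemma norm_matrix2_le:
  fixes d :: "real \<times> real"
  assumes "\<bar>c11\<bar> \<le> B" "\<bar>c12\<bar> \<le> B" "\<bar>c21\<bar> \<le> B" "\<bar>c22\<bar> \<le> B"
  shows "norm (c11 * fst d + c12 * snd d, c21 * fst d + c22 * snd d) \<le> 4 * B * norm d"
proof -
  have components: "\<bar>fst d\<bar> \<le> norm d" "\<bar>snd d\<bar> \<le> norm d"
    using norm_fst_le[of "fst d" "snd d"] norm_snd_le[of "snd d" "fst d"] by simp_all
  have row: "\<bar>c * fst d + c' * snd d\<bar> \<le> 2 * B * norm d" if "\<bar>c\<bar> \<le> B" "\<bar>c'\<bar> \<le> B" for c c'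
  proof -
    have "\<bar>c * fst d + c' * snd d\<bar> \<le> \<bar>c\<bar> * \<bar>fst d\<bar> + \<bar>c'\<bar> * \<bar>snd d\<bar>"
      by (metis abs_mult abs_triangle_ineq)
    also have "\<dots> \<le> B * norm d + B * norm d"
      using that components by (intro add_mono mult_mono) auto
    finally show ?thesis by simp
  qed
  have "norm (c11 * fst d + c12 * snd d, c21 * fst d + c22 * snd d)
      \<le> \<bar>c11 * fst d + c12 * snd d\<bar> + \<bar>c21 * fst d + c22 * snd d\<bar>"
    using norm_Pair_le[of "c11 * fst d + c12 * snd d" "c21 * fst d + c22 * snd d"] by simp
  also have "\<dots> \<le> 2 * B * norm d + 2 * B * norm d"
    using assms by (intro add_mono row)
  finally show ?thesis by simp
qed

lemma has_integral_linear_field_iff: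
  "(linear_field a11 a12 a21 a22 b1 b2 z has_integral z t) S \<longleftrightarrow>
     ((\<lambda>s. a11 s * fst (z s) + a12 s * snd (z s) + b1 s) has_integral fst (z t)) S \<and>
     ((\<lambda>s. a21 s * fst (z s) + a22 s * snd (z s) + b2 s) has_integral snd (z t)) S"
  unfolding has_integral_Pair_iff[symmetric] by (simp add: linear_field_def[abs_def])

context
  fixes a11 a12 a21 a22 b1 b2 :: "real \<Rightarrow> real" and T :: real
  assumes coefficients: "bounded_measurable_on {0..T} a11" "bounded_measurable_on {0..T} a12"
    "bounded_measurable_on {0..T} a21" "bounded_measurable_on {0..T} a22"
    "bounded_measurable_on {0..T} b1" "bounded_measurable_on {0..T} b2"
begin

lemma linear_field_integrable:
  assumes "continuous_on {0..T} z"
  shows "linear_field a11 a12 a21 a22 b1 b2 z integrable_on {0..T}"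
proof -
  have "bounded_measurable_on {0..T} (\<lambda>s. fst (z s))" "bounded_measurable_on {0..T} (\<lambda>s. snd (z s))"
    using assms by (auto intro!: bounded_measurable_on_continuous continuous_intros)
  then have "(\<lambda>s. a11 s * fst (z s) + a12 s * snd (z s) + b1 s) integrable_on {0..T}"
    "(\<lambda>s. a21 s * fst (z s) + a22 s * snd (z s) + b2 s) integrable_on {0..T}"
    using coefficients by (auto intro!: bounded_measurable_on_integrable bounded_measurable_on_intros)
  then show ?thesis
    unfolding linear_field_def integrable_on_def by (auto simp: has_integral_Pair_iff)
qed

lemma linear_field_lipschitz:
  obtains L where "0 \<le> L"
    "\<And>z w s. s \<in> {0..T} \<Longrightarrow> norm (linear_field a11 a12 a21 a22 b1 b2 z s - linear_field a11 a12 a21 a22 b1 b2 w s)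
      \<le> L * norm (z s - w s)"
proof -
  obtain B11 where B11: "\<And>s. s \<in> {0..T} \<Longrightarrow> \<bar>a11 s\<bar> \<le> B11"
    using bounded_measurable_onE[OF coefficients(1)] by blast
  obtain B12 where B12: "\<And>s. s \<in> {0..T} \<Longrightarrow> \<bar>a12 s\<bar> \<le> B12"
    using bounded_measurable_onE[OF coefficients(2)] by blast
  obtain B21 where B21: "\<And>s. s \<in> {0..T} \<Longrightarrow> \<bar>a21 s\<bar> \<le> B21"
    using bounded_measurable_onE[OF coefficients(3)] by blast
  obtain B22 where B22: "\<And>s. s \<in> {0..T} \<Longrightarrow> \<bar>a22 s\<bar> \<le> B22"
    using bounded_measurable_onE[OF coefficients(4)] by blast
  define B where "B = \<bar>B11\<bar> + \<bar>B12\<bar> + \<bar>B21\<bar> + \<bar>B22\<bar>"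
  have "norm (linear_field a11 a12 a21 a22 b1 b2 z s - linear_field a11 a12 a21 a22 b1 b2 w s)
      \<le> 4 * B * norm (z s - w s)" if s: "s \<in> {0..T}" for z w s
  proof -
    have "linear_field a11 a12 a21 a22 b1 b2 z s - linear_field a11 a12 a21 a22 b1 b2 w s
        = (a11 s * fst (z s - w s) + a12 s * snd (z s - w s), a21 s * fst (z s - w s) + a22 s * snd (z s - w s))"
      by (simp add: linear_field_def algebra_simps)
    then show ?thesis
      using B11[OF s] B12[OF s] B21[OF s] B22[OF s]
      by (simp only:) (rule norm_matrix2_le; simp add: B_def)
  qed
  then show thesis by (intro that[of "4 * B"]) (auto simp: B_def)
qed

lemma linear_system_solvable:
  assumes "0 \<le> T"
  shows "\<exists>\<phi> \<psi>. continuous_on {0..T} \<phi> \<and> continuous_on {0..T} \<psi> \<and>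
    (\<forall>t\<in>{0..T}. ((\<lambda>s. a11 s * \<phi> s + a12 s * \<psi> s + b1 s) has_integral \<phi> t) {0..t} \<and>
                ((\<lambda>s. a21 s * \<phi> s + a22 s * \<psi> s + b2 s) has_integral \<psi> t) {0..t})"
proof -
  obtain L where "0 \<le> L" and lipschitz: "\<And>z w s. s \<in> {0..T} \<Longrightarrow>
      norm (linear_field a11 a12 a21 a22 b1 b2 z s - linear_field a11 a12 a21 a22 b1 b2 w s) \<le> L * norm (z s - w s)"
    using linear_field_lipschitz by blast
  obtain z where "continuous_on {0..T} z"
    and "\<forall>t\<in>{0..T}. (linear_field a11 a12 a21 a22 b1 b2 z has_integral z t) {0..t}"
    using volterra_integral_equation_solvable[OF assms \<open>0 \<le> L\<close> linear_field_integrable lipschitz]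
    by blast
  then show ?thesis
    by (intro exI[of _ "\<lambda>s. fst (z s)"] exI[of _ "\<lambda>s. snd (z s)"])
      (auto intro!: continuous_intros simp: has_integral_linear_field_iff)
qed

lemma linear_system_solvable_backward:
  assumes "0 \<le> T"
  shows "\<exists>\<phi> \<psi>. continuous_on {0..T} \<phi> \<and> continuous_on {0..T} \<psi> \<and>
    (\<forall>t\<in>{0..T}. ((\<lambda>s. a11 s * \<phi> s + a12 s * \<psi> s + b1 s) has_integral \<phi> t) {t..T} \<and>
                ((\<lambda>s. a21 s * \<phi> s + a22 s * \<psi> s + b2 s) has_integral \<psi> t) {t..T})"
proof -
  obtain L where "0 \<le> L" and lipschitz: "\<And>z w s. s \<in> {0..T} \<Longrightarrow>
      norm (linear_field a11 a12 a21 a22 b1 b2 z s - linear_field a11 a12 a21 a22 b1 b2 w s) \<le> L * norm (z s - w s)"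
    using linear_field_lipschitz by blast
  obtain z where "continuous_on {0..T} z"
    and "\<forall>t\<in>{0..T}. (linear_field a11 a12 a21 a22 b1 b2 z has_integral z t) {t..T}"
    using volterra_integral_equation_solvable_backward[OF assms \<open>0 \<le> L\<close> linear_field_integrable lipschitz]
    by blast
  then show ?thesis
    by (intro exI[of _ "\<lambda>s. fst (z s)"] exI[of _ "\<lambda>s. snd (z s)"])
      (auto intro!: continuous_intros simp: has_integral_linear_field_iff)
qed

end

section \<open>Gronwall's inequality and positivity\<close>

lemma backward_gronwall_iterate:
  fixes d :: "real \<Rightarrow> real"
  assumes "0 \<le> C" and cont: "continuous_on {a..b} d"
    and le: "\<And>s. s \<in> {a..b} \<Longrightarrow> d s \<le> C * integral {s..b} d"
    and bound: "\<And>s. s \<in> {a..b} \<Longrightarrow> d s \<le> M"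
  shows "s \<in> {a..b} \<Longrightarrow> d s \<le> M * C ^ n * (b - s) ^ n / fact n"
proof (induction n arbitrary: s)
  case 0
  then show ?case using bound by simp
next
  case (Suc n)
  define c where "c = M * C ^ n / fact n"
  have sub: "{s..b} \<subseteq> {a..b}" using Suc.prems by auto
  have power: "((\<lambda>u. c * (b - u) ^ n) has_integral c * ((b - s) ^ Suc n / Suc n)) {s..b}"
    using Suc.prems by (intro has_integral_mult_right has_integral_power_to) auto
  have "integral {s..b} d \<le> integral {s..b} (\<lambda>u. c * (b - u) ^ n)"
    using Suc.IH sub
    by (intro integral_le integrable_continuous_interval continuous_on_subset[OF cont sub]
        has_integral_integrable[OF power]) (auto simp: c_def)
  also have "\<dots> = c * ((b - s) ^ Suc n / Suc n)"
    using power by (rule integral_unique)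
  finally have "C * integral {s..b} d \<le> C * (c * ((b - s) ^ Suc n / Suc n))"
    using \<open>0 \<le> C\<close> by (rule mult_left_mono)
  also have "\<dots> = M * C ^ Suc n * (b - s) ^ Suc n / fact (Suc n)"
    by (simp add: c_def field_simps del: of_nat_Suc)
  finally show ?case using le[OF Suc.prems] by linarith
qed

lemma backward_gronwall_eq_0:
  fixes d :: "real \<Rightarrow> real"
  assumes "a \<le> b" "0 \<le> C" and cont: "continuous_on {a..b} d"
    and nonneg: "\<And>s. s \<in> {a..b} \<Longrightarrow> 0 \<le> d s"
    and le: "\<And>s. s \<in> {a..b} \<Longrightarrow> d s \<le> C * integral {s..b} d"
  shows "d a = 0"
proof -
  obtain M where M: "\<And>s. s \<in> {a..b} \<Longrightarrow> d s \<le> M"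
    using compact_attains_sup[OF compact_continuous_image[OF cont]] \<open>a \<le> b\<close> by fastforce
  have "summable (\<lambda>n. (C * (b - a)) ^ n / fact n)"
    using summable_exp[of "C * (b - a)"] by (simp add: divide_inverse mult.commute)
  then have "(\<lambda>n. M * ((C * (b - a)) ^ n / fact n)) \<longlonglongrightarrow> M * 0"
    by (intro tendsto_mult_left summable_LIMSEQ_zero)
  moreover have "d a \<le> M * ((C * (b - a)) ^ n / fact n)" for n
    using backward_gronwall_iterate[OF \<open>0 \<le> C\<close> cont le M, of a n] \<open>a \<le> b\<close>
    by (simp add: power_mult_distrib)
  ultimately have "d a \<le> M * 0"
    by (intro LIMSEQ_le_const) auto
  then show ?thesis using nonneg[of a] \<open>a \<le> b\<close> by auto
qed

lemma continuous_first_zero: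
  fixes x :: "real \<Rightarrow> real"
  assumes cont: "continuous_on {0..T} x" and "0 < x 0" "t \<in> {0..T}" "x t \<le> 0"
  obtains z where "z \<in> {0..T}" "x z = 0" "\<And>s. s \<in> {0..z} \<Longrightarrow> 0 \<le> x s"
proof -
  define S where "S = {0..T} \<inter> x -` {..0}"
  have "closed S" unfolding S_def by (rule continuous_closed_preimage[OF cont]) auto
  moreover have "bdd_below S" unfolding S_def by (rule bdd_belowI[of _ 0]) auto
  moreover have "t \<in> S" using assms by (auto simp: S_def)
  ultimately have "Inf S \<in> S" using closed_contains_Inf by blast
  then have z: "0 \<le> Inf S" "Inf S \<le> T" "x (Inf S) \<le> 0" by (auto simp: S_def)
  have first: "Inf S \<le> s" if "s \<in> {0..T}" "x s \<le> 0" for s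
    using that \<open>bdd_below S\<close> by (intro cInf_lower) (auto simp: S_def)
  have "continuous_on {0..Inf S} x" using continuous_on_subset[OF cont] z by auto
  then obtain y where y: "0 \<le> y" "y \<le> Inf S" "x y = 0"
    using IVT2'[of x "Inf S" 0 0] z \<open>0 < x 0\<close> by auto
  then have "Inf S \<le> y" using first[of y] z by auto
  then have "x (Inf S) = 0" using y by simp
  moreover have "0 \<le> x s" if "s \<in> {0..Inf S}" for s
  proof (rule ccontr)
    assume "\<not> 0 \<le> x s"
    then have "Inf S \<le> s" using first[of s] that z by auto
    then have "s = Inf S" using that by auto
    then show False using \<open>\<not> 0 \<le> x s\<close> \<open>x (Inf S) = 0\<close> by simp
  qed
  ultimately show thesis using z by (intro that[of "Inf S"]) auto
qed

lemma has_integral_increment: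
  fixes g x :: "real \<Rightarrow> real"
  assumes eq: "\<And>t. t \<in> {0..T} \<Longrightarrow> (g has_integral (x t - x 0)) {0..t}"
    and "0 \<le> s" "s \<le> z" "z \<le> T"
  shows "(g has_integral (x z - x s)) {s..z}"
proof -
  have z: "z \<in> {0..T}" and s: "s \<in> {0..T}" using assms by auto
  have "g integrable_on {s..z}"
    using integrable_on_subinterval[OF has_integral_integrable[OF eq[OF z]]] assms by auto
  then have "(g has_integral (x s - x 0) + integral {s..z} g) {0..z}"
    using has_integral_combine[OF _ _ eq[OF s] integrable_integral] assms by auto
  then have "(x s - x 0) + integral {s..z} g = x z - x 0"
    by (rule has_integral_unique[OF _ eq[OF z]])
  then have "integral {s..z} g = x z - x s" by simp
  then show ?thesis
    using integrable_integral[OF \<open>g integrable_on {s..z}\<close>] by simp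
qed

lemma linear_integral_equation_pos:
  fixes x c :: "real \<Rightarrow> real"
  assumes "0 \<le> T" "0 < x 0" and cont: "continuous_on {0..T} x"
    and eq: "\<And>t. t \<in> {0..T} \<Longrightarrow> ((\<lambda>s. x s * c s) has_integral (x t - x 0)) {0..t}"
    and bound: "\<And>s. s \<in> {0..T} \<Longrightarrow> \<bar>c s\<bar> \<le> C"
    and "t \<in> {0..T}"
  shows "0 < x t"
proof (rule ccontr)
  assume "\<not> 0 < x t"
  then have "x t \<le> 0" by simp
  then obtain z where z: "z \<in> {0..T}" "x z = 0" and nonneg: "\<And>s. s \<in> {0..z} \<Longrightarrow> 0 \<le> x s"
    using continuous_first_zero[OF cont \<open>0 < x 0\<close> \<open>t \<in> {0..T}\<close>] by blast
  have "0 \<le> C" using bound[of 0] \<open>0 \<le> T\<close> by auto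
  have cont_z: "continuous_on {0..z} x" using continuous_on_subset[OF cont] z by auto
  have "x s \<le> C * integral {s..z} x" if s: "s \<in> {0..z}" for s
  proof -
    have "((\<lambda>u. x u * c u) has_integral x z - x s) {s..z}"
      by (rule has_integral_increment[where T=T]) (use eq s z in auto)
    then have "x s = - integral {s..z} (\<lambda>u. x u * c u)"
      using \<open>x z = 0\<close> by (simp add: integral_unique)
    also have "\<dots> \<le> norm (integral {s..z} (\<lambda>u. x u * c u))"
      by simp
    also have "\<dots> \<le> integral {s..z} (\<lambda>u. C * x u)"
    proof (rule integral_norm_bound_integral)
      show "(\<lambda>u. x u * c u) integrable_on {s..z}"
        using \<open>((\<lambda>u. x u * c u) has_integral x z - x s) {s..z}\<close> by blast
      show "(\<lambda>u. C * x u) integrable_on {s..z}"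
        using s by (intro integrable_continuous_interval continuous_intros continuous_on_subset[OF cont_z]) auto
    next
      fix u assume "u \<in> {s..z}"
      then have "0 \<le> x u" "\<bar>c u\<bar> \<le> C" using nonneg[of u] bound[of u] s z by auto
      then show "norm (x u * c u) \<le> C * x u"
        using mult_left_mono[of "\<bar>c u\<bar>" C "x u"] by (simp add: abs_mult mult.commute)
    qed
    finally show ?thesis by simp
  qed
  then have "x 0 = 0"
    using backward_gronwall_eq_0[OF _ \<open>0 \<le> C\<close> cont_z nonneg] z by auto
  then show False using \<open>0 < x 0\<close> by simp
qed

section \<open>Fubini's theorem for indefinite integrals\<close>

lemma set_integrable_bounded_Icc:
  fixes g :: "real \<Rightarrow> real"
  assumes g: "g \<in> borel_measurable borel" and bd: "\<And>x. \<bar>g x\<bar> \<le> M"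
  shows "set_integrable lborel {u..v} g"
  unfolding set_integrable_def
proof (rule Bochner_Integration.integrable_bound)
  have "emeasure lborel {u..v} < top" using emeasure_lborel_cbox_finite[of u v] by (simp add: cbox_interval)
  then show "integrable lborel (\<lambda>x. M * indicator {u..v} x :: real)"
    by (intro integrable_mult_right integrable_real_indicator) auto
  show "(\<lambda>x. indicator {u..v} x *\<^sub>R g x) \<in> borel_measurable lborel" using g by measurable
  show "AE x in lborel. norm (indicator {u..v} x *\<^sub>R g x) \<le> norm (M * indicator {u..v} x :: real)"
  proof (intro AE_I2)
    fix x
    have M0: "0 \<le> M" using bd[of x] by auto
    show "norm (indicator {u..v} x *\<^sub>R g x) \<le> norm (M * indicator {u..v} x :: real)"
      using bd[of x] M0 by (auto simp: indicator_def)
  qed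
qed

lemma integral_lborel_indicator_Icc:
  fixes g :: "real \<Rightarrow> real"
  assumes "g \<in> borel_measurable borel" "\<And>x. \<bar>g x\<bar> \<le> M"
  shows "(LINT x|lborel. indicator {u..v} x * g x) = integral {u..v} g"
  using set_borel_integral_eq_integral(2)[OF set_integrable_bounded_Icc[OF assms]]
  by (simp add: set_lebesgue_integral_def)

lemma integrable_lborel_triangle:
  fixes a b :: "real \<Rightarrow> real"
  assumes [measurable]: "a \<in> borel_measurable borel" "b \<in> borel_measurable borel"
    and bound: "\<And>x. \<bar>a x\<bar> \<le> M \<and> \<bar>b x\<bar> \<le> M"
  shows "integrable (lborel \<Otimes>\<^sub>M lborel)
    (\<lambda>(x, y). indicator {0..T} x * a x * (indicator {0..x} y * b y) :: real)"
proof (rule Bochner_Integration.integrable_bound)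
  show "integrable (lborel \<Otimes>\<^sub>M lborel) (\<lambda>p. M * M * indicator (cbox (0, 0) (T, T)) p :: real)"
    unfolding lborel_prod using emeasure_lborel_cbox_finite[of "(0::real, 0::real)" "(T, T)"]
    by (intro integrable_mult_right integrable_real_indicator) auto
  have "\<bar>indicator {0..T} x * a x * (indicator {0..x} y * b y)\<bar> \<le> M * M * indicator (cbox (0, 0) (T, T)) (x, y)"
    for x y :: real
  proof (cases "x \<in> {0..T} \<and> y \<in> {0..x}")
    case True
    then have "(x, y) \<in> cbox (0, 0) (T, T)" by (auto simp: cbox_Pair_iff)
    then show ?thesis using True bound[of x] bound[of y] by (auto simp: abs_mult intro!: mult_mono)
  qed auto
  then show "AE p in lborel \<Otimes>\<^sub>M lborel.
      norm ((\<lambda>(x, y). indicator {0..T} x * a x * (indicator {0..x} y * b y)) p)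
      \<le> norm (M * M * indicator (cbox (0, 0) (T, T)) p :: real)"
    using bound[of 0] by (intro AE_I2) (auto split: prod.split)
qed (unfold indicator_def atLeastAtMost_iff, measurable)

lemma integral_swap_indefinite_borel:
  fixes a b :: "real \<Rightarrow> real"
  assumes [measurable]: "a \<in> borel_measurable borel" "b \<in> borel_measurable borel"
    and bound: "\<And>x. \<bar>a x\<bar> \<le> M \<and> \<bar>b x\<bar> \<le> M"
  shows "integral {0..T} (\<lambda>t. a t * integral {0..t} b) = integral {0..T} (\<lambda>s. b s * integral {s..T} a)"
proof -
  define f where "f x y = indicator {0..T} x * a x * (indicator {0..x} y * b y)" for x y :: real
  have integrable: "integrable (lborel \<Otimes>\<^sub>M lborel) (\<lambda>(x, y). f x y)"
    unfolding f_def using integrable_lborel_triangle[OF assms] .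
  have inner_y: "(LINT y|lborel. f x y) = indicator {0..T} x * (a x * integral {0..x} b)" for x
    using integral_lborel_indicator_Icc[of b M 0 x] bound by (simp add: f_def)
  have "f x y = indicator {0..T} y * b y * (indicator {y..T} x * a x)" for x y
    by (auto simp: f_def indicator_def)
  then have inner_x: "(LINT x|lborel. f x y) = indicator {0..T} y * (b y * integral {y..T} a)" for y
    using integral_lborel_indicator_Icc[of a M y T] bound by simp
  have "set_integrable lborel {0..T} (\<lambda>x. a x * integral {0..x} b)"
    "set_integrable lborel {0..T} (\<lambda>y. b y * integral {y..T} a)"
    using lborel_pair.integrable_fst[OF integrable] lborel_pair.integrable_snd[OF integrable]
    unfolding set_integrable_def inner_x inner_y by simp_all
  then have "integral {0..T} (\<lambda>t. a t * integral {0..t} b) = (LINT x|lborel. LINT y|lborel. f x y)"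
    "integral {0..T} (\<lambda>s. b s * integral {s..T} a) = (LINT y|lborel. LINT x|lborel. f x y)"
    unfolding inner_x inner_y by (simp_all add: set_borel_integral_eq_integral(2)[symmetric] set_lebesgue_integral_def)
  then show ?thesis
    using lborel_pair.Fubini_integral[OF integrable] by simp
qed

lemma bounded_borel_representative:
  fixes a :: "real \<Rightarrow> real"
  assumes a: "a \<in> borel_measurable (lebesgue_on {0..T})"
    and bd: "\<And>x. x \<in> {0..T} \<Longrightarrow> \<bar>a x\<bar> \<le> M" and M: "0 \<le> M"
  shows "\<exists>a'. a' \<in> borel_measurable borel \<and> (\<forall>x. \<bar>a' x\<bar> \<le> M) \<and> negligible {x \<in> {0..T}. a x \<noteq> a' x}"
proof -
  define A where "A x = (if x \<in> {0..T} then a x else 0)" for x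
  have "A \<in> borel_measurable lebesgue" using borel_measurable_if_I[OF a] unfolding A_def[abs_def] by simp
  then obtain g where g: "g \<in> borel_measurable lborel" and ae: "AE x in lborel. A x = g x"
    using completion_ex_borel_measurable_real by blast
  define a' where "a' x = max (-M) (min M (g x))" for x
  have a'm: "a' \<in> borel_measurable borel" using g unfolding a'_def by simp
  have a'b: "\<forall>x. \<bar>a' x\<bar> \<le> M" using M by (auto simp: a'_def)
  have Ab: "\<bar>A x\<bar> \<le> M" for x using bd M by (auto simp: A_def)
  have ae2: "AE x in lborel. A x = a' x"
    using ae
  proof eventually_elim
    case (elim x) then show ?case using Ab[of x] by (auto simp: a'_def)
  qed
  then obtain N where N: "{x \<in> space lborel. \<not> A x = a' x} \<subseteq> N" "emeasure lborel N = 0" "N \<in> sets lborel"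
    by (rule AE_E)
  have "N \<in> null_sets lborel" using N by auto
  then have "N \<in> null_sets lebesgue" by (rule null_sets_completionI)
  then have "negligible N" by (simp add: negligible_iff_null_sets)
  moreover have "{x \<in> {0..T}. a x \<noteq> a' x} \<subseteq> N" using N(1) by (auto simp: A_def)
  ultimately have "negligible {x \<in> {0..T}. a x \<noteq> a' x}" by (rule negligible_subset)
  then show ?thesis using a'm a'b by blast
qed

lemma integral_swap_indefinite:
  fixes a b :: "real \<Rightarrow> real"
  assumes "bounded_measurable_on {0..T} a" "bounded_measurable_on {0..T} b"
  shows "integral {0..T} (\<lambda>t. a t * integral {0..t} b) = integral {0..T} (\<lambda>s. b s * integral {s..T} a)"
proof -
  obtain A where a: "0 \<le> A" "\<And>x. x \<in> {0..T} \<Longrightarrow> \<bar>a x\<bar> \<le> A"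
    using bounded_measurable_onE[OF assms(1)] by blast
  obtain B where b: "0 \<le> B" "\<And>x. x \<in> {0..T} \<Longrightarrow> \<bar>b x\<bar> \<le> B"
    using bounded_measurable_onE[OF assms(2)] by blast
  \<comment> \<open>Fubini needs Borel measurability, so pass to bounded Borel representatives\<close>
  define M where "M = A + B"
  have M: "0 \<le> M" and bd: "\<And>x. x \<in> {0..T} \<Longrightarrow> \<bar>a x\<bar> \<le> M \<and> \<bar>b x\<bar> \<le> M"
    using a b by (force simp: M_def)+
  obtain a' where a': "a' \<in> borel_measurable borel" "\<forall>x. \<bar>a' x\<bar> \<le> M"
    and na: "negligible {x \<in> {0..T}. a x \<noteq> a' x}"
    using bounded_borel_representative[OF bounded_measurable_on_measurable[OF assms(1)] _ M] bd by blast
  obtain b' where b': "b' \<in> borel_measurable borel" "\<forall>x. \<bar>b' x\<bar> \<le> M"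
    and nb: "negligible {x \<in> {0..T}. b x \<noteq> b' x}"
    using bounded_borel_representative[OF bounded_measurable_on_measurable[OF assms(2)] _ M] bd by blast
  have ib: "integral {0..t} b = integral {0..t} b'" if "t \<in> {0..T}" for t
    by (rule integral_spike[OF nb]) (use that in auto)
  have ia: "integral {s..T} a = integral {s..T} a'" if "s \<in> {0..T}" for s
    by (rule integral_spike[OF na]) (use that in auto)
  have "integral {0..T} (\<lambda>t. a t * integral {0..t} b) = integral {0..T} (\<lambda>t. a' t * integral {0..t} b')"
    by (rule integral_spike[OF na]) (auto simp: ib)
  also have "\<dots> = integral {0..T} (\<lambda>s. b' s * integral {s..T} a')"
    by (rule integral_swap_indefinite_borel[OF a'(1) b'(1)]) (use a'(2) b'(2) in auto)
  also have "\<dots> = integral {0..T} (\<lambda>s. b s * integral {s..T} a)"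
    by (rule integral_spike[OF nb]) (auto simp: ia)
  finally show ?thesis .
qed

lemma integral_by_parts_indefinite:
  fixes L k x y :: "real \<Rightarrow> real"
  assumes bounded: "bounded_measurable_on {0..T} L" "bounded_measurable_on {0..T} k"
    and continuous: "continuous_on {0..T} x" "continuous_on {0..T} y"
    and x: "\<And>t. t \<in> {0..T} \<Longrightarrow> (k has_integral x t) {0..t}"
    and y: "\<And>t. t \<in> {0..T} \<Longrightarrow> (L has_integral - y t) {t..T}"
  shows "((\<lambda>t. L t * x t + k t * y t) has_integral 0) {0..T}"
proof -
  have "integral {0..T} (\<lambda>t. L t * x t) = integral {0..T} (\<lambda>t. L t * integral {0..t} k)"
    by (rule integral_cong) (simp add: integral_unique[OF x])
  also have "\<dots> = integral {0..T} (\<lambda>s. k s * integral {s..T} L)"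
    by (rule integral_swap_indefinite[OF bounded])
  also have "\<dots> = integral {0..T} (\<lambda>s. - (k s * y s))"
    by (rule integral_cong) (simp add: integral_unique[OF y])
  also have "\<dots> = - integral {0..T} (\<lambda>s. k s * y s)"
    by (rule integral_neg)
  finally have "integral {0..T} (\<lambda>t. L t * x t) + integral {0..T} (\<lambda>s. k s * y s) = 0"
    by simp
  moreover have "(\<lambda>t. L t * x t) integrable_on {0..T}" "(\<lambda>t. k t * y t) integrable_on {0..T}"
    using bounded continuous by (auto intro!: bounded_measurable_on_integrable
        bounded_measurable_on_mult[OF _ bounded_measurable_on_continuous])
  ultimately show ?thesis
    using has_integral_add[OF integrable_integral integrable_integral] by fastforce
qed

lemma adjoint_identity:
  fixes a11 a12 a21 a22 b1 b2 \<phi> \<psi> p q :: "real \<Rightarrow> real"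
  assumes coefficients: "bounded_measurable_on {0..T} a11" "bounded_measurable_on {0..T} a12"
      "bounded_measurable_on {0..T} a21" "bounded_measurable_on {0..T} a22"
      "bounded_measurable_on {0..T} b1" "bounded_measurable_on {0..T} b2"
    and continuous: "continuous_on {0..T} \<phi>" "continuous_on {0..T} \<psi>"
      "continuous_on {0..T} p" "continuous_on {0..T} q"
    and state: "\<And>t. t \<in> {0..T} \<Longrightarrow> ((\<lambda>s. a11 s * \<phi> s + a12 s * \<psi> s + b1 s) has_integral \<phi> t) {0..t}"
      "\<And>t. t \<in> {0..T} \<Longrightarrow> ((\<lambda>s. a21 s * \<phi> s + a22 s * \<psi> s + b2 s) has_integral \<psi> t) {0..t}"
    and adjoint: "\<And>t. t \<in> {0..T} \<Longrightarrow> ((\<lambda>s. 1 - p s * a11 s - q s * a21 s) has_integral - p t) {t..T}"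
      "\<And>t. t \<in> {0..T} \<Longrightarrow> ((\<lambda>s. 1 - p s * a12 s - q s * a22 s) has_integral - q t) {t..T}"
  shows "integral {0..T} (\<lambda>s. \<phi> s + \<psi> s) = - integral {0..T} (\<lambda>s. p s * b1 s + q s * b2 s)"
proof -
  have cont_bm: "bounded_measurable_on {0..T} \<phi>" "bounded_measurable_on {0..T} \<psi>"
    "bounded_measurable_on {0..T} p" "bounded_measurable_on {0..T} q"
    using continuous by (auto intro: bounded_measurable_on_continuous)
  have "((\<lambda>t. (1 - p t * a11 t - q t * a21 t) * \<phi> t + (a11 t * \<phi> t + a12 t * \<psi> t + b1 t) * p t) has_integral 0) {0..T}"
    by (rule integral_by_parts_indefinite[OF _ _ continuous(1,3) state(1) adjoint(1)])
      (use coefficients cont_bm in \<open>auto intro!: bounded_measurable_on_intros\<close>)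
  moreover have "((\<lambda>t. (1 - p t * a12 t - q t * a22 t) * \<psi> t + (a21 t * \<phi> t + a22 t * \<psi> t + b2 t) * q t) has_integral 0) {0..T}"
    by (rule integral_by_parts_indefinite[OF _ _ continuous(2,4) state(2) adjoint(2)])
      (use coefficients cont_bm in \<open>auto intro!: bounded_measurable_on_intros\<close>)
  ultimately have "((\<lambda>t. (1 - p t * a11 t - q t * a21 t) * \<phi> t + (a11 t * \<phi> t + a12 t * \<psi> t + b1 t) * p t
      + ((1 - p t * a12 t - q t * a22 t) * \<psi> t + (a21 t * \<phi> t + a22 t * \<psi> t + b2 t) * q t)) has_integral 0 + 0) {0..T}"
    by (rule has_integral_add)
  then have "((\<lambda>t. (\<phi> t + \<psi> t) + (p t * b1 t + q t * b2 t)) has_integral 0) {0..T}"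
    by (simp add: algebra_simps)
  moreover have "(\<lambda>t. \<phi> t + \<psi> t) integrable_on {0..T}" "(\<lambda>t. p t * b1 t + q t * b2 t) integrable_on {0..T}"
    using coefficients cont_bm
    by (auto intro!: bounded_measurable_on_integrable bounded_measurable_on_add bounded_measurable_on_mult)
  ultimately have "integral {0..T} (\<lambda>t. \<phi> t + \<psi> t) + integral {0..T} (\<lambda>t. p t * b1 t + q t * b2 t) = 0"
    by (simp add: integral_add[symmetric] integral_unique)
  then show ?thesis by linarith
qed

section \<open>The optimal control problem\<close>

lemma projection_interval_ineq:
  fixes x e c :: real
  assumes "0 \<le> e" "e \<le> c"
  shows "(min c (max 0 x) - e)^2 \<le> (x - e) * (min c (max 0 x) - e)"
proof (cases "x \<le> 0")
  case True
  then have "min c (max 0 x) = 0" using assms by auto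
  moreover have "0 \<le> (- x) * e" using True assms by (intro mult_nonneg_nonneg) auto
  ultimately show ?thesis by (simp add: power2_eq_square algebra_simps)
next
  case False
  show ?thesis
  proof (cases "c \<le> x")
    case True
    then have p: "min c (max 0 x) = c" using False by auto
    have "0 \<le> (c - e) * (x - c)" using True assms by simp
    then show ?thesis unfolding p by (simp add: power2_eq_square algebra_simps)
  next
    case False2: False
    then have "min c (max 0 x) = x" using False by auto
    then show ?thesis by (simp add: power2_eq_square)
  qed
qed

lemma AE_eq_0_if_integral_nonpos:
  fixes q :: "real \<Rightarrow> real"
  assumes q: "q integrable_on {a..b}" and nn: "\<And>s. s \<in> {a..b} \<Longrightarrow> 0 \<le> q s" and le: "integral {a..b} q \<le> 0"
  shows "AE t in lborel. t \<in> {a..b} \<longrightarrow> q t = 0"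
proof -
  have z: "integral {a..b} q = 0" using le integral_nonneg[OF q nn] by linarith
  have af: "q absolutely_integrable_on {a..b}" using nn
    by (intro absolutely_integrable_onI q integrable_eq[OF q]) simp
  then have "integral {a..b} q = set_lebesgue_integral lebesgue {a..b} q"
    by (intro set_lebesgue_integral_eq_integral(2)[symmetric])
  then have i0: "(LINT x|lebesgue. indicator {a..b} x *\<^sub>R q x) = 0" using z unfolding set_lebesgue_integral_def by simp
  have int: "integrable lebesgue (\<lambda>x. indicat_real {a..b} x *\<^sub>R q x)" by (metis af set_integrable_def)
  have "AE x in lebesgue. 0 \<le> indicat_real {a..b} x *\<^sub>R q x" using nn by (intro AE_I2) (auto simp: indicator_def)
  then have "AE x in lebesgue. indicat_real {a..b} x *\<^sub>R q x = 0" using integral_nonneg_eq_0_iff_AE[OF int] i0 by simp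
  then have "AE x in lebesgue. x \<in> {a..b} \<longrightarrow> q x = 0" by eventually_elim (auto simp: indicator_def)
  then show ?thesis by (simp add: AE_completion_iff)
qed

lemma nonpos_if_le_small_multiples:
  fixes x C \<epsilon> :: real
  assumes "0 < \<epsilon>" and le: "\<And>e. 0 < e \<Longrightarrow> e \<le> \<epsilon> \<Longrightarrow> x \<le> e * C"
  shows "x \<le> 0"
proof (rule tendsto_lowerbound)
  have "((\<lambda>e. e * C) \<longlongrightarrow> 0 * C) (at_right 0)" by (intro tendsto_intros)
  then show "((\<lambda>e. e * C) \<longlongrightarrow> 0) (at_right 0)" by simp
  show "\<forall>\<^sub>F e in at_right 0. x \<le> e * C"
    using eventually_at_right_real[OF \<open>0 < \<epsilon>\<close>] by eventually_elim (auto intro: le)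
qed simp

lemma continuous_on_if_indefinite_integral:
  fixes g x :: "real \<Rightarrow> 'a::banach"
  assumes "0 \<le> T" and x: "\<And>t. t \<in> {0..T} \<Longrightarrow> (g has_integral (x t - c)) {0..t}"
  shows "continuous_on {0..T} x"
proof -
  have "g integrable_on {0..T}" using x[of T] \<open>0 \<le> T\<close> by auto
  then have "continuous_on {0..T} (\<lambda>t. c + integral {0..t} g)"
    by (intro continuous_intros indefinite_integral_continuous_1)
  then show ?thesis
    by (rule continuous_on_eq) (simp add: integral_unique[OF x])
qed

definition logistic_remainder :: "real \<Rightarrow> real \<Rightarrow> real \<Rightarrow> real \<Rightarrow> real \<Rightarrow> real \<Rightarrow> real \<Rightarrow> real" where
  "logistic_remainder \<beta> K x y u v e =
     1/2 * \<beta> * (u * v - (u\<^sup>2 * y + 2 * x * u * v + 2 * y * u * v + x * v\<^sup>2) / K)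
     - e * (1/2 * \<beta> * (u\<^sup>2 * v + u * v\<^sup>2) / K)"

lemma logistic_expansion:
  "1/2 * (x + e * u) * (y + e * v) * \<beta> * Lfac K (x + e * u) (y + e * v)
   = 1/2 * x * y * \<beta> * Lfac K x y
     + e * ((y * \<beta> / 2 * Lfac K x y - x * y * \<beta> / (2 * K)) * u
            + (x * \<beta> / 2 * Lfac K x y - x * y * \<beta> / (2 * K)) * v)
     + e\<^sup>2 * logistic_remainder \<beta> K x y u v e"
  by (cases "K = 0") (simp_all add: Lfac_def logistic_remainder_def field_simps power2_eq_square)

locale optimal_control =
  fixes \<beta> \<delta> K T f0 m0 :: real and \<eta>1 \<eta>2 f m :: "real \<Rightarrow> real"
  assumes delta: "0 < \<delta>" "\<delta> < 1" and K: "0 < K" and T: "0 < T"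
    and initial: "0 < f0" "0 < m0"
    and admissible: "admissible1 \<delta> T \<eta>1 \<eta>2"
    and state: "is_state1 \<beta> \<delta> K T f0 m0 \<eta>1 \<eta>2 f m"
    and optimal: "\<forall>u1 u2 g h. admissible1 \<delta> T u1 u2 \<and> is_state1 \<beta> \<delta> K T f0 m0 u1 u2 g h
      \<longrightarrow> J1 T u1 u2 g h \<le> J1 T \<eta>1 \<eta>2 f m"
begin

lemma control_bounds: "t \<in> {0..T} \<Longrightarrow> 0 \<le> \<eta>1 t \<and> \<eta>1 t \<le> 1 \<and> 0 \<le> \<eta>2 t \<and> \<eta>2 t < \<delta>"
  using admissible by (auto simp: admissible1_def)

lemma measurable_controls [measurable]:
  "\<eta>1 \<in> borel_measurable (lebesgue_on {0..T})" "\<eta>2 \<in> borel_measurable (lebesgue_on {0..T})"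
  using admissible by (auto simp: admissible1_def)

lemma bounded_measurable_controls:
  "bounded_measurable_on {0..T} \<eta>1" "bounded_measurable_on {0..T} \<eta>2"
proof -
  have "\<bar>\<eta>1 s\<bar> \<le> 1" "\<bar>\<eta>2 s\<bar> \<le> 1" if "s \<in> {0..T}" for s
    using control_bounds[OF that] delta by auto
  then show "bounded_measurable_on {0..T} \<eta>1" "bounded_measurable_on {0..T} \<eta>2"
    by (auto intro!: bounded_measurable_onI[of _ _ 1] measurable_controls)
qed

lemma state_initial: "f 0 = f0" "m 0 = m0"
  using state by (auto simp: is_state1_def)

lemma state_equations:
  assumes "t \<in> {0..T}"
  shows "((\<lambda>s. f s * (1/2 * m s * \<beta> * Lfac K (f s) (m s) - \<delta> - \<eta>1 s)) has_integral (f t - f0)) {0..t}"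
    and "((\<lambda>s. m s * (1/2 * f s * \<beta> * Lfac K (f s) (m s) - \<delta> + \<eta>2 s)) has_integral (m t - m0)) {0..t}"
  using state assms unfolding is_state1_def by (auto simp: algebra_simps)

lemma continuous_state: "continuous_on {0..T} f" "continuous_on {0..T} m"
  using continuous_on_if_indefinite_integral[OF less_imp_le[OF T] state_equations(1)]
    continuous_on_if_indefinite_integral[OF less_imp_le[OF T] state_equations(2)] by auto

lemma measurable_state [measurable]:
  "f \<in> borel_measurable (lebesgue_on {0..T})" "m \<in> borel_measurable (lebesgue_on {0..T})"
  using continuous_state by (auto intro: continuous_imp_measurable_on_sets_lebesgue)

lemma state_pos:
  assumes "t \<in> {0..T}"
  shows "0 < f t" "0 < m t"
proof -
  have "bounded_measurable_on {0..T} (\<lambda>s. (1/2 * m s * \<beta> * Lfac K (f s) (m s) - \<delta>) - \<eta>1 s)"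
    by (rule bounded_measurable_on_diff[OF bounded_measurable_on_continuous bounded_measurable_controls(1)])
      (use continuous_state K in \<open>auto simp: Lfac_def intro!: continuous_intros\<close>)
  then obtain C where "0 \<le> C"
    and C: "\<And>s. s \<in> {0..T} \<Longrightarrow> \<bar>1/2 * m s * \<beta> * Lfac K (f s) (m s) - \<delta> - \<eta>1 s\<bar> \<le> C"
    by (erule bounded_measurable_onE)
  show "0 < f t"
    by (rule linear_integral_equation_pos[OF less_imp_le[OF T] _ continuous_state(1) _ C assms])
      (use state_equations(1) state_initial initial in simp_all)
  have "bounded_measurable_on {0..T} (\<lambda>s. (1/2 * f s * \<beta> * Lfac K (f s) (m s) - \<delta>) + \<eta>2 s)"
    by (rule bounded_measurable_on_add[OF bounded_measurable_on_continuous bounded_measurable_controls(2)])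
      (use continuous_state K in \<open>auto simp: Lfac_def intro!: continuous_intros\<close>)
  then obtain C where "0 \<le> C"
    and C: "\<And>s. s \<in> {0..T} \<Longrightarrow> \<bar>1/2 * f s * \<beta> * Lfac K (f s) (m s) - \<delta> + \<eta>2 s\<bar> \<le> C"
    by (erule bounded_measurable_onE)
  show "0 < m t"
    by (rule linear_integral_equation_pos[OF less_imp_le[OF T] _ continuous_state(2) _ C assms])
      (use state_equations(2) state_initial initial in simp_all)
qed

lemma state_lower_bound:
  obtains lo where "0 < lo" "\<And>s. s \<in> {0..T} \<Longrightarrow> lo \<le> f s \<and> lo \<le> m s"
proof -
  obtain x where x: "x \<in> {0..T}" "\<forall>y\<in>{0..T}. f x \<le> f y"
    using continuous_attains_inf[OF _ _ continuous_state(1)] T by auto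
  obtain z where z: "z \<in> {0..T}" "\<forall>y\<in>{0..T}. m z \<le> m y"
    using continuous_attains_inf[OF _ _ continuous_state(2)] T by auto
  show thesis
    by (rule that[of "min (f x) (m z)"]) (use x z state_pos in \<open>force simp: min_le_iff_disj\<close>)+
qed

text \<open>The matrix of the a_ij is the Jacobian of the right-hand side of the state system with
  respect to (f, m); the adjoint system is driven by its transpose.\<close>

definition "a11 s = m s * \<beta> / 2 * Lfac K (f s) (m s) - f s * m s * \<beta> / (2 * K) - \<delta> - \<eta>1 s"
definition "a12 s = f s * \<beta> / 2 * Lfac K (f s) (m s) - f s * m s * \<beta> / (2 * K)"
definition "a21 s = m s * \<beta> / 2 * Lfac K (f s) (m s) - f s * m s * \<beta> / (2 * K)"
definition "a22 s = f s * \<beta> / 2 * Lfac K (f s) (m s) - f s * m s * \<beta> / (2 * K) - \<delta> + \<eta>2 s"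

lemma bounded_measurable_jacobian:
  "bounded_measurable_on {0..T} a11" "bounded_measurable_on {0..T} a12"
  "bounded_measurable_on {0..T} a21" "bounded_measurable_on {0..T} a22"
proof -
  have "continuous_on {0..T} a12" "continuous_on {0..T} a21"
    unfolding a12_def[abs_def] a21_def[abs_def] Lfac_def using K continuous_state
    by (auto intro!: continuous_intros)
  then show bm: "bounded_measurable_on {0..T} a12" "bounded_measurable_on {0..T} a21"
    by (auto intro: bounded_measurable_on_continuous)
  have "a11 = (\<lambda>s. a21 s - \<delta> - \<eta>1 s)" "a22 = (\<lambda>s. a12 s - \<delta> + \<eta>2 s)"
    by (auto simp: a11_def a21_def a12_def a22_def)
  then show "bounded_measurable_on {0..T} a11" "bounded_measurable_on {0..T} a22"
    by (auto intro!: bounded_measurable_on_diff bounded_measurable_on_add bm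
        bounded_measurable_on_const bounded_measurable_controls)
qed

lemma adjoint_exists:
  "\<exists>p1 p2. continuous_on {0..T} p1 \<and> continuous_on {0..T} p2 \<and> is_adjoint1 \<beta> \<delta> K T \<eta>1 \<eta>2 f m p1 p2"
proof -
  obtain p1 p2 where cont: "continuous_on {0..T} p1" "continuous_on {0..T} p2"
    and eq: "\<And>t. t \<in> {0..T} \<Longrightarrow> ((\<lambda>s. a11 s * p1 s + a21 s * p2 s + - 1) has_integral p1 t) {t..T}"
      "\<And>t. t \<in> {0..T} \<Longrightarrow> ((\<lambda>s. a12 s * p1 s + a22 s * p2 s + - 1) has_integral p2 t) {t..T}"
    using linear_system_solvable_backward[OF bounded_measurable_jacobian(1,3,2,4)
        bounded_measurable_on_const bounded_measurable_on_const less_imp_le[OF T]]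
    by blast
  have "p1 T = 0" "p2 T = 0"
    using eq(1)[of T] eq(2)[of T] T by (auto intro: has_integral_unique[OF _ has_integral_refl(2)])
  moreover have "((\<lambda>s. 1 - p1 s * a11 s - p2 s * a21 s) has_integral (p1 T - p1 t)) {t..T}"
      "((\<lambda>s. 1 - p1 s * a12 s - p2 s * a22 s) has_integral (p2 T - p2 t)) {t..T}"
    if "t \<in> {0..T}" for t
    using has_integral_neg[OF eq(1)[OF that]] has_integral_neg[OF eq(2)[OF that]] \<open>p1 T = 0\<close> \<open>p2 T = 0\<close>
    by (simp_all add: algebra_simps)
  ultimately show ?thesis
    using cont unfolding is_adjoint1_def a11_def a12_def a21_def a22_def by blast
qed

end

locale control_variation = optimal_control +
  fixes v1 v2 \<phi> \<psi> :: "real \<Rightarrow> real" and a :: real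
  assumes margin: "0 < a"
    and measurable_variation: "v1 \<in> borel_measurable (lebesgue_on {0..T})"
      "v2 \<in> borel_measurable (lebesgue_on {0..T})"
    and variation_bounds: "\<And>s. s \<in> {0..T} \<Longrightarrow> a \<le> v1 s \<and> v1 s \<le> 1 - a \<and> a \<le> v2 s \<and> v2 s \<le> \<delta> - a"
    and continuous_linearized: "continuous_on {0..T} \<phi>" "continuous_on {0..T} \<psi>"
    and linearized:
      "\<And>t. t \<in> {0..T} \<Longrightarrow> ((\<lambda>s. a11 s * \<phi> s + a12 s * \<psi> s - f s * (v1 s - \<eta>1 s)) has_integral \<phi> t) {0..t}"
      "\<And>t. t \<in> {0..T} \<Longrightarrow> ((\<lambda>s. a21 s * \<phi> s + a22 s * \<psi> s + m s * (v2 s - \<eta>2 s)) has_integral \<psi> t) {0..t}"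
begin

definition "direction1 s = v1 s - \<eta>1 s"
definition "direction2 s = v2 s - \<eta>2 s"
text \<open>The controls perturbed_control1 e, perturbed_control2 e are chosen so that (f + e \<phi>, m + e \<psi>) is exactly their state: the
  terms of second order in e absorb the quadratic remainder of the logistic growth term.\<close>

definition "growth_remainder e s = logistic_remainder \<beta> K (f s) (m s) (\<phi> s) (\<psi> s) e"
definition "correction1 e s = (growth_remainder e s - direction1 s * \<phi> s) / (f s + e * \<phi> s)"
definition "correction2 e s = - (growth_remainder e s + direction2 s * \<psi> s) / (m s + e * \<psi> s)"
definition "perturbed_control1 e s = \<eta>1 s + e * (direction1 s + e * correction1 e s)"
definition "perturbed_control2 e s = \<eta>2 s + e * (direction2 s + e * correction2 e s)"

lemma remainder_identities:
  assumes "f s + e * \<phi> s \<noteq> 0" "m s + e * \<psi> s \<noteq> 0"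
  shows "e * e * correction1 e s * (f s + e * \<phi> s) = e * e * (growth_remainder e s - direction1 s * \<phi> s)"
    and "e * e * correction2 e s * (m s + e * \<psi> s) = - (e * e * (growth_remainder e s + direction2 s * \<psi> s))"
proof -
  have "correction1 e s * (f s + e * \<phi> s) = growth_remainder e s - direction1 s * \<phi> s"
    "correction2 e s * (m s + e * \<psi> s) = - (growth_remainder e s + direction2 s * \<psi> s)"
    using assms by (simp_all add: correction1_def correction2_def)
  then show "e * e * correction1 e s * (f s + e * \<phi> s) = e * e * (growth_remainder e s - direction1 s * \<phi> s)"
    "e * e * correction2 e s * (m s + e * \<psi> s) = - (e * e * (growth_remainder e s + direction2 s * \<psi> s))"
    by (metis mult.assoc, metis mult.assoc mult_minus_right)
qed

lemma perturbed_vector_field: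
  assumes "f s + e * \<phi> s \<noteq> 0" "m s + e * \<psi> s \<noteq> 0"
  shows "1/2 * (f s + e * \<phi> s) * (m s + e * \<psi> s) * \<beta> * Lfac K (f s + e * \<phi> s) (m s + e * \<psi> s)
      - \<delta> * (f s + e * \<phi> s) - perturbed_control1 e s * (f s + e * \<phi> s)
    = (1/2 * f s * m s * \<beta> * Lfac K (f s) (m s) - \<delta> * f s - \<eta>1 s * f s)
      + e * (a11 s * \<phi> s + a12 s * \<psi> s - f s * (v1 s - \<eta>1 s))"
    and "1/2 * (f s + e * \<phi> s) * (m s + e * \<psi> s) * \<beta> * Lfac K (f s + e * \<phi> s) (m s + e * \<psi> s)
      - \<delta> * (m s + e * \<psi> s) + perturbed_control2 e s * (m s + e * \<psi> s)
    = (1/2 * f s * m s * \<beta> * Lfac K (f s) (m s) - \<delta> * m s + \<eta>2 s * m s)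
      + e * (a21 s * \<phi> s + a22 s * \<psi> s + m s * (v2 s - \<eta>2 s))"
  using remainder_identities[OF assms]
  unfolding perturbed_control1_def perturbed_control2_def logistic_expansion growth_remainder_def[symmetric]
    a11_def a12_def a21_def a22_def direction1_def direction2_def
  by (simp_all add: algebra_simps power2_eq_square)

lemma perturbed_state:
  assumes nonzero: "\<And>s. s \<in> {0..T} \<Longrightarrow> f s + e * \<phi> s \<noteq> 0 \<and> m s + e * \<psi> s \<noteq> 0"
  shows "is_state1 \<beta> \<delta> K T f0 m0 (perturbed_control1 e) (perturbed_control2 e)
    (\<lambda>s. f s + e * \<phi> s) (\<lambda>s. m s + e * \<psi> s)"
  unfolding is_state1_def
proof (intro conjI ballI)
  have "\<phi> 0 = 0" "\<psi> 0 = 0"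
    using linearized[of 0] T by (auto intro: has_integral_unique[OF _ has_integral_refl(2)])
  then show "f 0 + e * \<phi> 0 = f0" "m 0 + e * \<psi> 0 = m0"
    using state_initial by simp_all
  fix t assume t: "t \<in> {0..T}"
  have nonzero': "f s + e * \<phi> s \<noteq> 0" "m s + e * \<psi> s \<noteq> 0" if "s \<in> {0..t}" for s
    using nonzero[of s] that t by auto
  have "((\<lambda>s. (1/2 * f s * m s * \<beta> * Lfac K (f s) (m s) - \<delta> * f s - \<eta>1 s * f s)
      + e * (a11 s * \<phi> s + a12 s * \<psi> s - f s * (v1 s - \<eta>1 s))) has_integral (f t - f0) + e * \<phi> t) {0..t}"
    using state t unfolding is_state1_def by (intro has_integral_add has_integral_mult_right linearized) auto
  then have "((\<lambda>s. 1/2 * (f s + e * \<phi> s) * (m s + e * \<psi> s) * \<beta> * Lfac K (f s + e * \<phi> s) (m s + e * \<psi> s)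
      - \<delta> * (f s + e * \<phi> s) - perturbed_control1 e s * (f s + e * \<phi> s)) has_integral (f t - f0) + e * \<phi> t) {0..t}"
    by (rule has_integral_eq[rotated]) (metis perturbed_vector_field(1) nonzero')
  then show "((\<lambda>s. 1/2 * (f s + e * \<phi> s) * (m s + e * \<psi> s) * \<beta> * Lfac K (f s + e * \<phi> s) (m s + e * \<psi> s)
      - \<delta> * (f s + e * \<phi> s) - perturbed_control1 e s * (f s + e * \<phi> s)) has_integral (f t + e * \<phi> t - f0)) {0..t}"
    by (simp only: diff_add_eq)
  have "((\<lambda>s. (1/2 * f s * m s * \<beta> * Lfac K (f s) (m s) - \<delta> * m s + \<eta>2 s * m s)
      + e * (a21 s * \<phi> s + a22 s * \<psi> s + m s * (v2 s - \<eta>2 s))) has_integral (m t - m0) + e * \<psi> t) {0..t}"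
    using state t unfolding is_state1_def by (intro has_integral_add has_integral_mult_right linearized) auto
  then have "((\<lambda>s. 1/2 * (f s + e * \<phi> s) * (m s + e * \<psi> s) * \<beta> * Lfac K (f s + e * \<phi> s) (m s + e * \<psi> s)
      - \<delta> * (m s + e * \<psi> s) + perturbed_control2 e s * (m s + e * \<psi> s)) has_integral (m t - m0) + e * \<psi> t) {0..t}"
    by (rule has_integral_eq[rotated]) (metis perturbed_vector_field(2) nonzero')
  then show "((\<lambda>s. 1/2 * (f s + e * \<phi> s) * (m s + e * \<psi> s) * \<beta> * Lfac K (f s + e * \<phi> s) (m s + e * \<psi> s)
      - \<delta> * (m s + e * \<psi> s) + perturbed_control2 e s * (m s + e * \<psi> s)) has_integral (m t + e * \<psi> t - m0)) {0..t}"
    by (simp only: diff_add_eq)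
qed

lemma variation_bound: "s \<in> {0..T} \<Longrightarrow> \<bar>direction1 s\<bar> \<le> 1 \<and> \<bar>direction2 s\<bar> \<le> 1"
  using variation_bounds[of s] control_bounds[of s] margin delta by (auto simp: direction1_def direction2_def)

lemma linearized_bound:
  obtains B where "0 \<le> B"
    "\<And>e s. 0 \<le> e \<Longrightarrow> e \<le> 1 \<Longrightarrow> s \<in> {0..T} \<Longrightarrow> \<bar>\<phi> s\<bar> \<le> B \<and> \<bar>\<psi> s\<bar> \<le> B \<and> \<bar>growth_remainder e s\<bar> \<le> B"
proof -
  define c0 where "c0 s = logistic_remainder \<beta> K (f s) (m s) (\<phi> s) (\<psi> s) 0" for s
  define c1 where "c1 s = 1/2 * \<beta> * ((\<phi> s)\<^sup>2 * \<psi> s + \<phi> s * (\<psi> s)\<^sup>2) / K" for s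
  have growth_remainder: "growth_remainder e s = c0 s - e * c1 s" for e s
    by (simp add: growth_remainder_def c0_def c1_def logistic_remainder_def)
  have "continuous_on {0..T} c0" "continuous_on {0..T} c1"
    unfolding c0_def[abs_def] c1_def[abs_def] logistic_remainder_def
    using continuous_state continuous_linearized K by (auto intro!: continuous_intros)
  then obtain B3 B4 where B3: "\<And>s. s \<in> {0..T} \<Longrightarrow> \<bar>c0 s\<bar> \<le> B3"
    and B4: "\<And>s. s \<in> {0..T} \<Longrightarrow> \<bar>c1 s\<bar> \<le> B4"
    by (metis bounded_measurable_on_continuous bounded_measurable_onE)
  obtain B1 B2 where B1: "\<And>s. s \<in> {0..T} \<Longrightarrow> \<bar>\<phi> s\<bar> \<le> B1"
    and B2: "\<And>s. s \<in> {0..T} \<Longrightarrow> \<bar>\<psi> s\<bar> \<le> B2"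
    using continuous_linearized by (metis bounded_measurable_on_continuous bounded_measurable_onE)
  show thesis
  proof (rule that[of "\<bar>B1\<bar> + \<bar>B2\<bar> + \<bar>B3\<bar> + \<bar>B4\<bar>"])
    fix e s :: real assume e: "0 \<le> e" "e \<le> 1" and s: "s \<in> {0..T}"
    have "\<bar>e * c1 s\<bar> \<le> \<bar>B4\<bar>"
      using e B4[OF s] mult_right_mono[of e 1 "\<bar>c1 s\<bar>"] by (auto simp: abs_mult)
    then show "\<bar>\<phi> s\<bar> \<le> \<bar>B1\<bar> + \<bar>B2\<bar> + \<bar>B3\<bar> + \<bar>B4\<bar> \<and> \<bar>\<psi> s\<bar> \<le> \<bar>B1\<bar> + \<bar>B2\<bar> + \<bar>B3\<bar> + \<bar>B4\<bar>
        \<and> \<bar>growth_remainder e s\<bar> \<le> \<bar>B1\<bar> + \<bar>B2\<bar> + \<bar>B3\<bar> + \<bar>B4\<bar>"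
      using B1[OF s] B2[OF s] B3[OF s] unfolding growth_remainder by auto
  qed simp
qed

lemma correction_bound:
  assumes s: "s \<in> {0..T}" and "0 < lo"
    and denominators: "lo / 2 \<le> f s + e * \<phi> s" "lo / 2 \<le> m s + e * \<psi> s"
    and bounds: "\<bar>\<phi> s\<bar> \<le> B" "\<bar>\<psi> s\<bar> \<le> B" "\<bar>growth_remainder e s\<bar> \<le> B"
  shows "\<bar>correction1 e s\<bar> \<le> 4 * B / lo \<and> \<bar>correction2 e s\<bar> \<le> 4 * B / lo"
proof -
  have "0 \<le> B" using bounds(1) by linarith
  have "\<bar>growth_remainder e s - direction1 s * \<phi> s\<bar> \<le> 2 * B"
    "\<bar>growth_remainder e s + direction2 s * \<psi> s\<bar> \<le> 2 * B"
    using bounds variation_bound[OF s] mult_mono[of "\<bar>direction1 s\<bar>" 1 "\<bar>\<phi> s\<bar>" B]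
      mult_mono[of "\<bar>direction2 s\<bar>" 1 "\<bar>\<psi> s\<bar>" B] \<open>0 \<le> B\<close>
    by (auto simp: abs_mult intro!: abs_triangle_ineq4[THEN order_trans] abs_triangle_ineq[THEN order_trans])
  moreover have "2 * B \<le> 4 * B / lo * (f s + e * \<phi> s)" "2 * B \<le> 4 * B / lo * (m s + e * \<psi> s)"
    using mult_left_mono[OF denominators(1), of "4 * B / lo"] mult_left_mono[OF denominators(2), of "4 * B / lo"]
      \<open>0 < lo\<close> \<open>0 \<le> B\<close> by auto
  moreover have "0 < f s + e * \<phi> s" "0 < m s + e * \<psi> s"
    using denominators \<open>0 < lo\<close> by auto
  ultimately show ?thesis
    by (auto simp: correction1_def correction2_def abs_divide pos_divide_le_eq)
qed

lemma perturbation_small: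
  obtains \<epsilon> R where "0 < \<epsilon>" "\<epsilon> \<le> 1/2" "0 \<le> R" "\<epsilon> * R \<le> a"
    "\<And>e s. 0 < e \<Longrightarrow> e \<le> \<epsilon> \<Longrightarrow> s \<in> {0..T} \<Longrightarrow>
       0 < f s + e * \<phi> s \<and> 0 < m s + e * \<psi> s \<and> \<bar>correction1 e s\<bar> \<le> R \<and> \<bar>correction2 e s\<bar> \<le> R"
proof -
  obtain lo where lo: "0 < lo" "\<And>s. s \<in> {0..T} \<Longrightarrow> lo \<le> f s \<and> lo \<le> m s"
    using state_lower_bound by blast
  obtain B where B: "0 \<le> B"
    "\<And>e s. 0 \<le> e \<Longrightarrow> e \<le> 1 \<Longrightarrow> s \<in> {0..T} \<Longrightarrow> \<bar>\<phi> s\<bar> \<le> B \<and> \<bar>\<psi> s\<bar> \<le> B \<and> \<bar>growth_remainder e s\<bar> \<le> B"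
    using linearized_bound by blast
  define R where "R = 4 * B / lo"
  define \<epsilon> where "\<epsilon> = min (1/2) (min (lo / (2 * B + 1)) (a / (R + 1)))"
  have "0 \<le> R" using B lo by (simp add: R_def)
  have "0 < \<epsilon>" using lo B margin \<open>0 \<le> R\<close> by (auto simp: \<epsilon>_def)
  have "\<epsilon> \<le> 1/2" unfolding \<epsilon>_def by (rule min.cobounded1)
  have "\<epsilon> * R \<le> a / (R + 1) * R"
    using \<open>0 \<le> R\<close> by (intro mult_right_mono) (auto simp: \<epsilon>_def)
  also have "\<dots> \<le> a" using margin \<open>0 \<le> R\<close> by (simp add: field_simps)
  finally have "\<epsilon> * R \<le> a" .
  have "\<epsilon> * B \<le> lo / (2 * B + 1) * B"
    using B(1) by (intro mult_right_mono) (auto simp: \<epsilon>_def)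
  also have "\<dots> \<le> lo / 2" using lo(1) B(1) by (simp add: field_simps)
  finally have "\<epsilon> * B \<le> lo / 2" .
  have "0 < f s + e * \<phi> s \<and> 0 < m s + e * \<psi> s \<and> \<bar>correction1 e s\<bar> \<le> R \<and> \<bar>correction2 e s\<bar> \<le> R"
    if e: "0 < e" "e \<le> \<epsilon>" and s: "s \<in> {0..T}" for e s
  proof -
    have bounds: "\<bar>\<phi> s\<bar> \<le> B" "\<bar>\<psi> s\<bar> \<le> B" "\<bar>growth_remainder e s\<bar> \<le> B"
      using B(2)[of e s] e \<open>\<epsilon> \<le> 1/2\<close> s by auto
    have "\<bar>e * \<phi> s\<bar> \<le> \<epsilon> * B" "\<bar>e * \<psi> s\<bar> \<le> \<epsilon> * B"
      using e bounds by (auto simp: abs_mult intro: mult_mono)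
    then have denominators: "lo / 2 \<le> f s + e * \<phi> s" "lo / 2 \<le> m s + e * \<psi> s"
      using lo(2)[OF s] \<open>\<epsilon> * B \<le> lo / 2\<close> by auto
    then show ?thesis
      using correction_bound[OF s lo(1) denominators bounds] lo(1) by (simp add: R_def)
  qed
  with \<open>0 < \<epsilon>\<close> \<open>\<epsilon> \<le> 1/2\<close> \<open>0 \<le> R\<close> \<open>\<epsilon> * R \<le> a\<close> show thesis
    by (intro that) auto
qed

lemma measurable_variation_data [measurable]:
  "v1 \<in> borel_measurable (lebesgue_on {0..T})" "v2 \<in> borel_measurable (lebesgue_on {0..T})"
  "\<phi> \<in> borel_measurable (lebesgue_on {0..T})" "\<psi> \<in> borel_measurable (lebesgue_on {0..T})"
  using measurable_variation continuous_linearized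
  by (auto intro: continuous_imp_measurable_on_sets_lebesgue)

lemma measurable_perturbed_control:
  "perturbed_control1 e \<in> borel_measurable (lebesgue_on {0..T})" "perturbed_control2 e \<in> borel_measurable (lebesgue_on {0..T})"
  "correction1 e \<in> borel_measurable (lebesgue_on {0..T})" "correction2 e \<in> borel_measurable (lebesgue_on {0..T})"
  unfolding perturbed_control1_def[abs_def] perturbed_control2_def[abs_def] correction1_def[abs_def]
    correction2_def[abs_def] growth_remainder_def[abs_def]
    logistic_remainder_def direction1_def[abs_def] direction2_def[abs_def]
  by measurable

lemma perturbed_control_admissible:
  assumes e: "0 < e" "e \<le> 1/2" and "e * R \<le> a"
    and r: "\<And>s. s \<in> {0..T} \<Longrightarrow> \<bar>correction1 e s\<bar> \<le> R \<and> \<bar>correction2 e s\<bar> \<le> R"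
  shows "admissible1 \<delta> T (perturbed_control1 e) (perturbed_control2 e)"
  unfolding admissible1_def
proof (intro conjI ballI measurable_perturbed_control)
  fix s assume s: "s \<in> {0..T}"
  have small: "\<bar>e * (e * r)\<bar> \<le> e * a" if "\<bar>r\<bar> \<le> R" for r
  proof -
    have "e * \<bar>r\<bar> \<le> a" using mult_left_mono[OF that less_imp_le[OF e(1)]] \<open>e * R \<le> a\<close> by simp
    then show ?thesis using e by (simp add: abs_mult mult_left_mono)
  qed
  have u: "perturbed_control1 e s = (1 - e) * \<eta>1 s + e * v1 s + e * (e * correction1 e s)"
    "perturbed_control2 e s = (1 - e) * \<eta>2 s + e * v2 s + e * (e * correction2 e s)"
    by (simp_all add: perturbed_control1_def perturbed_control2_def direction1_def direction2_def algebra_simps)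
  have "0 \<le> (1 - e) * \<eta>1 s" "(1 - e) * \<eta>1 s \<le> (1 - e) * 1"
    "0 \<le> (1 - e) * \<eta>2 s" "(1 - e) * \<eta>2 s < (1 - e) * \<delta>"
    using control_bounds[OF s] e by (auto intro: mult_left_mono mult_strict_left_mono)
  moreover have "e * a \<le> e * v1 s" "e * v1 s \<le> e * (1 - a)" "e * a \<le> e * v2 s" "e * v2 s \<le> e * (\<delta> - a)"
    using variation_bounds[OF s] e by (auto intro: mult_left_mono)
  moreover have "\<bar>e * (e * correction1 e s)\<bar> \<le> e * a" "\<bar>e * (e * correction2 e s)\<bar> \<le> e * a"
    using small r[OF s] by auto
  ultimately show "0 \<le> perturbed_control1 e s" "perturbed_control1 e s \<le> 1"
    "0 \<le> perturbed_control2 e s" "perturbed_control2 e s < \<delta>"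
    unfolding u by (auto simp: algebra_simps abs_le_iff)
qed

definition "first_variation = integral {0..T} (\<lambda>s. - (\<phi> s + \<psi> s) - \<eta>1 s * direction1 s - \<eta>2 s * direction2 s)"

lemma bounded_measurable_variation:
  "bounded_measurable_on {0..T} direction1" "bounded_measurable_on {0..T} direction2"
  using variation_bound
  by (auto intro!: bounded_measurable_onI[of _ _ 1] simp: direction1_def[abs_def] direction2_def[abs_def])

definition "objective_remainder e s = 1/2 * (direction1 s + e * correction1 e s)\<^sup>2 + \<eta>1 s * correction1 e s
  + 1/2 * (direction2 s + e * correction2 e s)\<^sup>2 + \<eta>2 s * correction2 e s"

lemma objective_expansion:
  "- ((f s + e * \<phi> s) + (m s + e * \<psi> s)) - 1/2 * ((perturbed_control1 e s)\<^sup>2 + (perturbed_control2 e s)\<^sup>2)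
    = (- (f s + m s) - 1/2 * ((\<eta>1 s)\<^sup>2 + (\<eta>2 s)\<^sup>2))
      + e * (- (\<phi> s + \<psi> s) - \<eta>1 s * direction1 s - \<eta>2 s * direction2 s) - e\<^sup>2 * objective_remainder e s"
  by (simp add: perturbed_control1_def perturbed_control2_def objective_remainder_def algebra_simps power2_eq_square)

lemma objective_remainder_bound:
  assumes e: "0 \<le> e" "e \<le> 1" and "0 \<le> R" and s: "s \<in> {0..T}"
    and r: "\<bar>correction1 e s\<bar> \<le> R" "\<bar>correction2 e s\<bar> \<le> R"
  shows "objective_remainder e s \<le> (1 + R)\<^sup>2 + 2 * R"
proof -
  have "\<bar>e * correction1 e s\<bar> \<le> R" "\<bar>e * correction2 e s\<bar> \<le> R"
    using r e mult_mono[of e 1 "\<bar>correction1 e s\<bar>" R] mult_mono[of e 1 "\<bar>correction2 e s\<bar>" R]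
    by (auto simp: abs_mult)
  then have "\<bar>direction1 s + e * correction1 e s\<bar> \<le> 1 + R" "\<bar>direction2 s + e * correction2 e s\<bar> \<le> 1 + R"
    using variation_bound[OF s] by (auto intro: abs_triangle_ineq[THEN order_trans])
  then have "(direction1 s + e * correction1 e s)\<^sup>2 \<le> (1 + R)\<^sup>2"
    "(direction2 s + e * correction2 e s)\<^sup>2 \<le> (1 + R)\<^sup>2"
    by (auto simp: abs_le_square_iff[symmetric] \<open>0 \<le> R\<close>)
  moreover have "\<bar>\<eta>1 s\<bar> * \<bar>correction1 e s\<bar> \<le> 1 * R" "\<bar>\<eta>2 s\<bar> * \<bar>correction2 e s\<bar> \<le> 1 * R"
    using control_bounds[OF s] r delta by (intro mult_mono; simp)+
  then have "\<eta>1 s * correction1 e s \<le> R" "\<eta>2 s * correction2 e s \<le> R"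
    by (simp_all add: abs_mult[symmetric] abs_le_iff)
  ultimately show ?thesis by (simp add: objective_remainder_def)
qed

lemma perturbed_objective:
  assumes e: "0 < e" "e \<le> 1" and "0 \<le> R"
    and r: "\<And>s. s \<in> {0..T} \<Longrightarrow> \<bar>correction1 e s\<bar> \<le> R \<and> \<bar>correction2 e s\<bar> \<le> R"
  shows "J1 T \<eta>1 \<eta>2 f m + e * first_variation - e\<^sup>2 * (((1 + R)\<^sup>2 + 2 * R) * T)
    \<le> J1 T (perturbed_control1 e) (perturbed_control2 e) (\<lambda>s. f s + e * \<phi> s) (\<lambda>s. m s + e * \<psi> s)"
proof -
  let ?E = "objective_remainder e"
  have bm_r: "bounded_measurable_on {0..T} (correction1 e)" "bounded_measurable_on {0..T} (correction2 e)"
    using r by (auto intro!: bounded_measurable_onI[of _ _ R] measurable_perturbed_control)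
  note bm = bounded_measurable_controls bounded_measurable_variation bm_r
    continuous_state[THEN bounded_measurable_on_continuous]
    continuous_linearized[THEN bounded_measurable_on_continuous]
  have integrable: "(\<lambda>s. - (f s + m s) - 1/2 * ((\<eta>1 s)\<^sup>2 + (\<eta>2 s)\<^sup>2)) integrable_on {0..T}"
      "(\<lambda>s. - (\<phi> s + \<psi> s) - \<eta>1 s * direction1 s - \<eta>2 s * direction2 s) integrable_on {0..T}"
      "?E integrable_on {0..T}"
    unfolding objective_remainder_def[abs_def] power2_eq_square
    by (intro bounded_measurable_on_integrable bounded_measurable_on_intros bm)+
  have "integral {0..T} ?E \<le> integral {0..T} (\<lambda>_. (1 + R)\<^sup>2 + 2 * R)"
    using objective_remainder_bound[OF less_imp_le[OF e(1)] e(2) \<open>0 \<le> R\<close>] r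
    by (intro integral_le integrable) auto
  then have "integral {0..T} ?E \<le> ((1 + R)\<^sup>2 + 2 * R) * T"
    using T by (simp add: mult.commute)
  then have "e\<^sup>2 * integral {0..T} ?E \<le> e\<^sup>2 * (((1 + R)\<^sup>2 + 2 * R) * T)"
    by (rule mult_left_mono) simp
  moreover have "J1 T (perturbed_control1 e) (perturbed_control2 e) (\<lambda>s. f s + e * \<phi> s) (\<lambda>s. m s + e * \<psi> s)
      = J1 T \<eta>1 \<eta>2 f m + e * first_variation - e\<^sup>2 * integral {0..T} ?E"
    unfolding J1_def first_variation_def objective_expansion
    using integral_diff[OF integrable_add[OF integrable(1) integrable_on_mult_right[OF integrable(2)]]
        integrable_on_mult_right[OF integrable(3)]]
      integral_add[OF integrable(1) integrable_on_mult_right[OF integrable(2)]]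
    by simp
  ultimately show ?thesis by linarith
qed

lemma first_variation_nonpos: "first_variation \<le> 0"
proof -
  obtain \<epsilon> R where "0 < \<epsilon>" "\<epsilon> \<le> 1/2" "0 \<le> R" "\<epsilon> * R \<le> a"
    and small: "\<And>e s. 0 < e \<Longrightarrow> e \<le> \<epsilon> \<Longrightarrow> s \<in> {0..T} \<Longrightarrow>
       0 < f s + e * \<phi> s \<and> 0 < m s + e * \<psi> s \<and> \<bar>correction1 e s\<bar> \<le> R \<and> \<bar>correction2 e s\<bar> \<le> R"
    using perturbation_small by blast
  show ?thesis
  proof (rule nonpos_if_le_small_multiples[OF \<open>0 < \<epsilon>\<close>])
    fix e assume e: "0 < e" "e \<le> \<epsilon>"
    have "e * R \<le> a"
      using mult_right_mono[OF e(2) \<open>0 \<le> R\<close>] \<open>\<epsilon> * R \<le> a\<close> by linarith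
    have "admissible1 \<delta> T (perturbed_control1 e) (perturbed_control2 e)"
      using e \<open>\<epsilon> \<le> 1/2\<close> \<open>e * R \<le> a\<close> small by (intro perturbed_control_admissible) auto
    moreover have "is_state1 \<beta> \<delta> K T f0 m0 (perturbed_control1 e) (perturbed_control2 e)
        (\<lambda>s. f s + e * \<phi> s) (\<lambda>s. m s + e * \<psi> s)"
      using small[OF e] by (intro perturbed_state) force
    ultimately have "J1 T (perturbed_control1 e) (perturbed_control2 e) (\<lambda>s. f s + e * \<phi> s) (\<lambda>s. m s + e * \<psi> s)
        \<le> J1 T \<eta>1 \<eta>2 f m"
      using optimal by blast
    moreover have "J1 T \<eta>1 \<eta>2 f m + e * first_variation - e\<^sup>2 * (((1 + R)\<^sup>2 + 2 * R) * T)
        \<le> J1 T (perturbed_control1 e) (perturbed_control2 e) (\<lambda>s. f s + e * \<phi> s) (\<lambda>s. m s + e * \<psi> s)"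
      using e \<open>\<epsilon> \<le> 1/2\<close> \<open>0 \<le> R\<close> small by (intro perturbed_objective) auto
    ultimately have "e * first_variation \<le> e * (e * (((1 + R)\<^sup>2 + 2 * R) * T))"
      by (simp add: power2_eq_square)
    then show "first_variation \<le> e * (((1 + R)\<^sup>2 + 2 * R) * T)"
      using e(1) by simp
  qed
qed

end

locale optimal_control_adjoint = optimal_control +
  fixes p1 p2 :: "real \<Rightarrow> real"
  assumes continuous_adjoint: "continuous_on {0..T} p1" "continuous_on {0..T} p2"
    and adjoint: "is_adjoint1 \<beta> \<delta> K T \<eta>1 \<eta>2 f m p1 p2"
begin

lemma adjoint_equations:
  assumes "t \<in> {0..T}"
  shows "((\<lambda>s. 1 - p1 s * a11 s - p2 s * a21 s) has_integral - p1 t) {t..T}"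
    and "((\<lambda>s. 1 - p1 s * a12 s - p2 s * a22 s) has_integral - p2 t) {t..T}"
  using adjoint assms unfolding is_adjoint1_def a11_def a12_def a21_def a22_def by auto

lemma variational_inequality:
  assumes "0 < a" and measurable: "v1 \<in> borel_measurable (lebesgue_on {0..T})"
      "v2 \<in> borel_measurable (lebesgue_on {0..T})"
    and bounds: "\<And>s. s \<in> {0..T} \<Longrightarrow> a \<le> v1 s \<and> v1 s \<le> 1 - a \<and> a \<le> v2 s \<and> v2 s \<le> \<delta> - a"
  shows "integral {0..T} (\<lambda>s. (- f s * p1 s - \<eta>1 s) * (v1 s - \<eta>1 s) + (m s * p2 s - \<eta>2 s) * (v2 s - \<eta>2 s)) \<le> 0"
proof -
  define b1 where "b1 s = - (f s * (v1 s - \<eta>1 s))" for s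
  define b2 where "b2 s = m s * (v2 s - \<eta>2 s)" for s
  have "\<bar>v1 s\<bar> \<le> 1" "\<bar>v2 s\<bar> \<le> 1" if "s \<in> {0..T}" for s
    using bounds[OF that] \<open>0 < a\<close> delta by auto
  then have bm_v: "bounded_measurable_on {0..T} v1" "bounded_measurable_on {0..T} v2"
    using measurable by (auto intro!: bounded_measurable_onI[of _ _ 1])
  have bm_b: "bounded_measurable_on {0..T} b1" "bounded_measurable_on {0..T} b2"
    unfolding b1_def[abs_def] b2_def[abs_def] using continuous_state
    by (auto intro!: bounded_measurable_on_intros bm_v bounded_measurable_controls
        intro: bounded_measurable_on_continuous)
  obtain \<phi> \<psi> where cont: "continuous_on {0..T} \<phi>" "continuous_on {0..T} \<psi>"
    and linearized: "\<And>t. t \<in> {0..T} \<Longrightarrow> ((\<lambda>s. a11 s * \<phi> s + a12 s * \<psi> s + b1 s) has_integral \<phi> t) {0..t}"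
      "\<And>t. t \<in> {0..T} \<Longrightarrow> ((\<lambda>s. a21 s * \<phi> s + a22 s * \<psi> s + b2 s) has_integral \<psi> t) {0..t}"
    using linear_system_solvable[OF bounded_measurable_jacobian bm_b less_imp_le[OF T]] by blast
  interpret variation: control_variation \<beta> \<delta> K T f0 m0 \<eta>1 \<eta>2 f m v1 v2 \<phi> \<psi> a
    using \<open>0 < a\<close> measurable bounds cont linearized
    by (intro control_variation.intro optimal_control_axioms control_variation_axioms.intro)
      (auto simp: b1_def b2_def)
  have duality: "integral {0..T} (\<lambda>s. \<phi> s + \<psi> s) = - integral {0..T} (\<lambda>s. p1 s * b1 s + p2 s * b2 s)"
    by (rule adjoint_identity[OF bounded_measurable_jacobian bm_b cont continuous_adjoint
          linearized adjoint_equations])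
  have integrand: "(- f s * p1 s - \<eta>1 s) * (v1 s - \<eta>1 s) + (m s * p2 s - \<eta>2 s) * (v2 s - \<eta>2 s)
      = (- (\<phi> s + \<psi> s) - \<eta>1 s * variation.direction1 s - \<eta>2 s * variation.direction2 s) + (\<phi> s + \<psi> s)
        + (p1 s * b1 s + p2 s * b2 s)" for s
    by (simp add: variation.direction1_def variation.direction2_def b1_def b2_def algebra_simps)
  have integrable:
      "(\<lambda>s. - (\<phi> s + \<psi> s) - \<eta>1 s * variation.direction1 s - \<eta>2 s * variation.direction2 s) integrable_on {0..T}"
      "(\<lambda>s. \<phi> s + \<psi> s) integrable_on {0..T}" "(\<lambda>s. p1 s * b1 s + p2 s * b2 s) integrable_on {0..T}"
    using cont continuous_adjoint bm_b
    by (auto intro!: bounded_measurable_on_integrable bounded_measurable_on_intros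
        bounded_measurable_controls variation.bounded_measurable_variation intro: bounded_measurable_on_continuous)
  show ?thesis
    unfolding integrand integral_add[OF integrable_add[OF integrable(1,2)] integrable(3)]
      integral_add[OF integrable(1,2)] duality
    using variation.first_variation_nonpos by (simp add: variation.first_variation_def)
qed

definition "proj1 s = min 1 (max 0 (- f s * p1 s))"
definition "proj2 s = min \<delta> (max 0 (m s * p2 s))"

lemma proj_bounds: "0 \<le> proj1 s" "proj1 s \<le> 1" "0 \<le> proj2 s" "proj2 s \<le> \<delta>"
  using delta by (auto simp: proj1_def proj2_def)

lemma bounded_measurable_projections:
  "bounded_measurable_on {0..T} proj1" "bounded_measurable_on {0..T} proj2"
proof -
  have [measurable]: "p1 \<in> borel_measurable (lebesgue_on {0..T})" "p2 \<in> borel_measurable (lebesgue_on {0..T})"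
    using continuous_adjoint by (auto intro: continuous_imp_measurable_on_sets_lebesgue)
  have "proj1 \<in> borel_measurable (lebesgue_on {0..T})" "proj2 \<in> borel_measurable (lebesgue_on {0..T})"
    unfolding proj1_def[abs_def] proj2_def[abs_def] by measurable
  then show "bounded_measurable_on {0..T} proj1" "bounded_measurable_on {0..T} proj2"
    using proj_bounds delta by (auto intro!: bounded_measurable_onI[of _ _ 1] intro: order_trans[of _ \<delta>])
qed

lemma projected_variation_nonpos:
  "integral {0..T} (\<lambda>s. (- f s * p1 s - \<eta>1 s) * (proj1 s - \<eta>1 s) + (m s * p2 s - \<eta>2 s) * (proj2 s - \<eta>2 s)) \<le> 0"
  (is "integral {0..T} ?Z \<le> 0")
proof -
  define G1 where "G1 s = - f s * p1 s - \<eta>1 s" for s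
  define G2 where "G2 s = m s * p2 s - \<eta>2 s" for s
  define D where "D s = G1 s * (1 - 2 * proj1 s) + G2 s * (1 - 2 / \<delta> * proj2 s)" for s
  have bm: "bounded_measurable_on {0..T} G1" "bounded_measurable_on {0..T} G2"
    using continuous_state continuous_adjoint unfolding G1_def[abs_def] G2_def[abs_def]
    by (auto intro!: bounded_measurable_on_intros bounded_measurable_controls
        intro: bounded_measurable_on_continuous)
  have integrable: "?Z integrable_on {0..T}" "D integrable_on {0..T}"
    unfolding D_def[abs_def] G1_def[symmetric] G2_def[symmetric]
    by (intro bounded_measurable_on_integrable bounded_measurable_on_intros bm
        bounded_measurable_projections bounded_measurable_controls)+
  have "integral {0..T} ?Z \<le> a * - integral {0..T} D" if a: "0 < a" "a \<le> \<delta> / 2" for a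
  proof -
    \<comment> \<open>the projection, pulled into the interior of the control box by a margin a\<close>
    define v1 where "v1 s = a + (1 - 2 * a) * proj1 s" for s
    define v2 where "v2 s = a + (1 - 2 * a / \<delta>) * proj2 s" for s
    have "0 \<le> 1 - 2 * a" "0 \<le> 1 - 2 * a / \<delta>" "(1 - 2 * a / \<delta>) * \<delta> = \<delta> - 2 * a"
      using a delta by (auto simp: field_simps)
    then have "a \<le> v1 s \<and> v1 s \<le> 1 - a \<and> a \<le> v2 s \<and> v2 s \<le> \<delta> - a" for s
      using proj_bounds[of s] mult_left_mono[of "proj1 s" 1 "1 - 2 * a"]
        mult_left_mono[of "proj2 s" \<delta> "1 - 2 * a / \<delta>"]
      unfolding v1_def v2_def by auto
    moreover have "bounded_measurable_on {0..T} v1" "bounded_measurable_on {0..T} v2"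
      unfolding v1_def[abs_def] v2_def[abs_def]
      by (intro bounded_measurable_on_intros bounded_measurable_projections)+
    ultimately have "integral {0..T} (\<lambda>s. G1 s * (v1 s - \<eta>1 s) + G2 s * (v2 s - \<eta>2 s)) \<le> 0"
      unfolding G1_def G2_def
      by (intro variational_inequality[OF a(1) bounded_measurable_on_measurable bounded_measurable_on_measurable])
    moreover have "G1 s * (v1 s - \<eta>1 s) + G2 s * (v2 s - \<eta>2 s) = ?Z s + a * D s" for s
      using delta unfolding v1_def v2_def D_def G1_def G2_def by (simp add: field_simps)
    ultimately show ?thesis
      using integral_add[OF integrable(1) integrable_on_mult_right[OF integrable(2)], of a] by simp
  qed
  then show ?thesis
    using delta by (intro nonpos_if_le_small_multiples[where \<epsilon>="\<delta> / 2" and C="- integral {0..T} D"]) auto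
qed

lemma optimal_control_characterization:
  "AE t in lborel. t \<in> {0..T} \<longrightarrow>
     \<eta>1 t = min 1 (max 0 (- f t * p1 t)) \<and> \<eta>2 t = min 1 (max 0 (m t * p2 t))"
proof -
  define q where "q s = (proj1 s - \<eta>1 s)\<^sup>2 + (proj2 s - \<eta>2 s)\<^sup>2" for s
  have "q s \<le> (- f s * p1 s - \<eta>1 s) * (proj1 s - \<eta>1 s) + (m s * p2 s - \<eta>2 s) * (proj2 s - \<eta>2 s)"
    if "s \<in> {0..T}" for s
    using projection_interval_ineq[of "\<eta>1 s" 1 "- f s * p1 s"] projection_interval_ineq[of "\<eta>2 s" \<delta> "m s * p2 s"]
      control_bounds[OF that]
    unfolding q_def proj1_def proj2_def by (simp add: add_mono)
  moreover have "q integrable_on {0..T}"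
    "(\<lambda>s. (- f s * p1 s - \<eta>1 s) * (proj1 s - \<eta>1 s) + (m s * p2 s - \<eta>2 s) * (proj2 s - \<eta>2 s)) integrable_on {0..T}"
    unfolding q_def[abs_def] power2_eq_square using continuous_state continuous_adjoint
    by (auto intro!: bounded_measurable_on_integrable bounded_measurable_on_intros
        bounded_measurable_projections bounded_measurable_controls intro: bounded_measurable_on_continuous)
  ultimately have "integral {0..T} q \<le> 0"
    using projected_variation_nonpos by (meson integral_le order_trans)
  then have "AE t in lborel. t \<in> {0..T} \<longrightarrow> q t = 0"
    by (rule AE_eq_0_if_integral_nonpos[OF \<open>q integrable_on {0..T}\<close>, rotated]) (simp add: q_def)
  then show ?thesis
  proof (rule AE_mp, intro AE_I2 impI)
    fix t assume "t \<in> {0..T} \<longrightarrow> q t = 0" "t \<in> {0..T}"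
    then have "\<eta>1 t = proj1 t" "\<eta>2 t = proj2 t"
      by (simp_all add: q_def sum_power2_eq_zero_iff)
    moreover have "proj2 t = min 1 (max 0 (m t * p2 t))"
      using \<open>\<eta>2 t = proj2 t\<close> control_bounds[OF \<open>t \<in> {0..T}\<close>] delta by (auto simp: proj2_def)
    ultimately show "\<eta>1 t = min 1 (max 0 (- f t * p1 t)) \<and> \<eta>2 t = min 1 (max 0 (m t * p2 t))"
      by (simp add: proj1_def)
  qed
qed

end

theorem mainTheorem6:
  fixes \<beta> \<delta> K T f0 m0 :: real
    and \<eta>1 \<eta>2 f m :: "real \<Rightarrow> real"
  assumes "0 < \<beta>" "\<beta> < 1" "0 < \<delta>" "\<delta> < 1" "0 < K" "0 < T"
    and "0 < f0" "0 < m0"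
    and adm: "admissible1 \<delta> T \<eta>1 \<eta>2"
    and st: "is_state1 \<beta> \<delta> K T f0 m0 \<eta>1 \<eta>2 f m"
    and opt: "\<forall>u1 u2 g h. admissible1 \<delta> T u1 u2 \<and> is_state1 \<beta> \<delta> K T f0 m0 u1 u2 g h
                 \<longrightarrow> J1 T u1 u2 g h \<le> J1 T \<eta>1 \<eta>2 f m"
  shows "\<exists>p1 p2. is_adjoint1 \<beta> \<delta> K T \<eta>1 \<eta>2 f m p1 p2 \<and>
           (AE t in lborel. t \<in> {0..T} \<longrightarrow>
              \<eta>1 t = min 1 (max 0 (- f t * p1 t)) \<and>
              \<eta>2 t = min 1 (max 0 (m t * p2 t)))"
proof -
  interpret optimal_control \<beta> \<delta> K T f0 m0 \<eta>1 \<eta>2 f m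
    using assms by unfold_locales auto
  obtain p1 p2 where "continuous_on {0..T} p1" "continuous_on {0..T} p2"
    and adjoint: "is_adjoint1 \<beta> \<delta> K T \<eta>1 \<eta>2 f m p1 p2"
    using adjoint_exists by blast
  then interpret optimal_control_adjoint \<beta> \<delta> K T f0 m0 \<eta>1 \<eta>2 f m p1 p2
    by unfold_locales
  show ?thesis
    using adjoint optimal_control_characterization by blast
qed

end
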